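(* There is an integer $k_0$ such that for any integer $k\ge k_0$ and any density $\alpha\le\alpha_0$ the following holds w.h.p. over the choice of the random $k$-CNF formula $\Phi=\Phi(k,n,\lfloor\alpha n\rfloor)$. There exists an $r_0$-marking $(\mathcal V_{\mathrm m},\mathcal V_{\mathrm a},\mathcal V_{\mathrm c})$ of $\Phi$. Moreover, for any such marking, for any $v\in\mathcal V_{\mathrm m}\cup\mathcal V_{\mathrm a}$, any $V\subseteq\mathcal V_{\mathrm m}\cup\mathcal V_{\mathrm a}$ with $v\notin V$, and any $\Lambda:V\to\{\mathsf F,\mathsf T\}$, $$\max\left\{\Pr_{\mu_{\Omega^\Lambda}}(v\mapsto\mathsf F),\ \Pr_{\mu_{\Omega^\Lambda}}(v\mapsto\mathsf T)\right\}\le\frac12\exp\!\left(\frac{1}{k\,2^{(r_0+\delta)k}}\right).$$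
   Context: The random $k$-CNF formula $\Phi(k,n,m)=(\mathcal V,\mathcal C)$ is uniform over $k$-CNF formulas with $n$ variables and $m$ clauses of $k$ literals each (repetitions allowed); w.h.p. means with probability $1-o(1)$ as $n\to\infty$. For a clause $c$, $\mathrm{var}(c)$ is its set of variables. The degree of a variable is the number of occurrences of its literals in $\Phi$. Constants: $r_0=0.117841$, $\delta=0.00001$, $\Delta=\lceil 2^{(r_0-2\delta)k}\rceil$, $\alpha_0=2^{(r_0-2\delta)k}/k^3$. A variable is high-degree if its degree is at least $\Delta$. Bad variables/clauses: let $\mathcal V_0$ be the high-degree variables and $\mathcal C_0$ the clauses with at least $3$ variables in $\mathcal V_0$; for $i\ge1$ put $\mathcal V_i=\mathcal V_{i-1}\cup\mathrm{var}(\mathcal C_{i-1})$, $\mathcal C_i=\{c:|\mathrm{var}(c)\cap\mathcal V_i|\ge3\}$, stopping at the first $i\ge1$ with $\mathcal V_i=\mathcal V_{i-1}$; $\mathcal V_{\mathrm{bad}}=\mathcal V_i$, $\mathcal C_{\mathrm{bad}}=\mathcal C_i$, $\mathcal V_{\mathrm{good}}=\mathcal V\setminus\mathcal V_{\mathrm{bad}}$, $\mathcal C_{\mathrm{good}}=\mathcal C\setminus\mathcal C_{\mathrm{bad}}$. A set $V\subseteq\mathcal V_{\mathrm{good}}$ is $r$-distributed if $|\mathrm{var}(c)\cap V|\ge r(k-3)$ for every $c\in\mathcal C_{\mathrm{good}}$. An $r$-marking of $\Phi$ is a partition $(\mathcal V_{\mathrm m},\mathcal V_{\mathrm a},\mathcal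 V_{\mathrm c})$ of $\mathcal V$ such that $\mathcal V_{\mathrm{bad}}\subseteq\mathcal V_{\mathrm c}$, $\mathcal V_{\mathrm c}\setminus\mathcal V_{\mathrm{bad}}$ is $(2r)$-distributed, and $\mathcal V_{\mathrm m}$ and $\mathcal V_{\mathrm a}$ are $r$-distributed subsets of good variables. For a partial assignment $\Lambda$, $\Phi^\Lambda$ is the formula obtained by removing the clauses satisfied by $\Lambda$ and removing false literals from the remaining clauses; $\Omega^\Lambda$ is the set of satisfying assignments of $\Phi^\Lambda$ and $\mu_{\Omega^\Lambda}$ the uniform distribution on it. *)

theory Defs
  imports Complex_Main "HOL-Library.FuncSet"
begin

text \<open>Variables are natural numbers; the variable set of a formula on n variables is {0..<n}.
  A literal is a pair (x, s): variable x, sign s (True = positive literal x, False = negated).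
  A clause is a list of literals, a formula a list of clauses (repetitions allowed).\<close>

type_synonym lit = "nat \<times> bool"
type_synonym clause = "lit list"
type_synonym cnf = "clause list"

definition r0 :: real where "r0 = 0.117841"
definition delta :: real where "delta = 0.00001"
definition Delta :: "nat \<Rightarrow> int" where
  "Delta k = \<lceil>2 powr ((r0 - 2 * delta) * real k)\<rceil>"
definition alpha0 :: "nat \<Rightarrow> real" where
  "alpha0 k = 2 powr ((r0 - 2 * delta) * real k) / real k ^ 3"

definition kcnf_formulas :: "nat \<Rightarrow> nat \<Rightarrow> nat \<Rightarrow> cnf set" where
  "kcnf_formulas k n m = {F. length F = m \<and> (\<forall>c\<in>set F. length c = k \<and> (\<forall>l\<in>set c. fst l < n))}"

definition prob_kcnf :: "nat \<Rightarrow> nat \<Rightarrow> nat \<Rightarrow> (cnf \<Rightarrow> bool) \<Rightarrow> real" where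
  "prob_kcnf k n m P = real (card {F \<in> kcnf_formulas k n m. P F}) / real (card (kcnf_formulas k n m))"

definition var_cl :: "clause \<Rightarrow> nat set" where
  "var_cl c = fst ` set c"

definition degree :: "cnf \<Rightarrow> nat \<Rightarrow> nat" where
  "degree F x = (\<Sum>c\<leftarrow>F. length (filter (\<lambda>l. fst l = x) c))"

definition high_deg :: "nat \<Rightarrow> nat \<Rightarrow> cnf \<Rightarrow> nat set" where
  "high_deg k n F = {x \<in> {0..<n}. int (degree F x) \<ge> Delta k}"

text \<open>Clauses are identified by their positions in the list.\<close>
definition clauses_hit :: "cnf \<Rightarrow> nat set \<Rightarrow> nat set" where
  "clauses_hit F V = {j. j < length F \<and> card (var_cl (F ! j) \<inter> V) \<ge> 3}"

fun V_iter :: "nat \<Rightarrow> nat \<Rightarrow> cnf \<Rightarrow> nat \<Rightarrow> nat set" where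
  "V_iter k n F 0 = high_deg k n F"
| "V_iter k n F (Suc i) = V_iter k n F i \<union> (\<Union>j\<in>clauses_hit F (V_iter k n F i). var_cl (F ! j))"

text \<open>The iteration is increasing in a finite set, so its limit (union) is the value at which it stops.\<close>
definition V_bad :: "nat \<Rightarrow> nat \<Rightarrow> cnf \<Rightarrow> nat set" where
  "V_bad k n F = (\<Union>i. V_iter k n F i)"
definition C_bad :: "nat \<Rightarrow> nat \<Rightarrow> cnf \<Rightarrow> nat set" where
  "C_bad k n F = clauses_hit F (V_bad k n F)"
definition V_good :: "nat \<Rightarrow> nat \<Rightarrow> cnf \<Rightarrow> nat set" where
  "V_good k n F = {0..<n} - V_bad k n F"
definition C_good :: "nat \<Rightarrow> nat \<Rightarrow> cnf \<Rightarrow> nat set" where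
  "C_good k n F = {0..<length F} - C_bad k n F"

definition r_distributed :: "nat \<Rightarrow> nat \<Rightarrow> cnf \<Rightarrow> real \<Rightarrow> nat set \<Rightarrow> bool" where
  "r_distributed k n F r V \<longleftrightarrow> V \<subseteq> V_good k n F \<and>
     (\<forall>j\<in>C_good k n F. real (card (var_cl (F ! j) \<inter> V)) \<ge> r * (real k - 3))"

definition marking :: "nat \<Rightarrow> nat \<Rightarrow> cnf \<Rightarrow> real \<Rightarrow> nat set \<Rightarrow> nat set \<Rightarrow> nat set \<Rightarrow> bool" where
  "marking k n F r Vm Va Vc \<longleftrightarrow>
     Vm \<inter> Va = {} \<and> Vm \<inter> Vc = {} \<and> Va \<inter> Vc = {} \<and> Vm \<union> Va \<union> Vc = {0..<n} \<and>
     V_bad k n F \<subseteq> Vc \<and> r_distributed k n F (2 * r) (Vc - V_bad k n F) \<and>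
     r_distributed k n F r Vm \<and> r_distributed k n F r Va"

text \<open>Phi^Lambda for a partial assignment Lambda with domain V (values of Lam outside V irrelevant).\<close>
definition reduce :: "cnf \<Rightarrow> nat set \<Rightarrow> (nat \<Rightarrow> bool) \<Rightarrow> cnf" where
  "reduce F V Lam = map (filter (\<lambda>l. fst l \<notin> V))
      (filter (\<lambda>c. \<not> (\<exists>l\<in>set c. fst l \<in> V \<and> Lam (fst l) = snd l)) F)"

definition Omega :: "nat \<Rightarrow> cnf \<Rightarrow> nat set \<Rightarrow> (nat \<Rightarrow> bool) \<Rightarrow> (nat \<Rightarrow> bool) set" where
  "Omega n F V Lam = {\<tau> \<in> ({0..<n} - V) \<rightarrow>\<^sub>E (UNIV :: bool set).
      \<forall>c\<in>set (reduce F V Lam). \<exists>l\<in>set c. \<tau> (fst l) = snd l}"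

definition prob_val :: "nat \<Rightarrow> cnf \<Rightarrow> nat set \<Rightarrow> (nat \<Rightarrow> bool) \<Rightarrow> nat \<Rightarrow> bool \<Rightarrow> real" where
  "prob_val n F V Lam v b =
     real (card {\<tau> \<in> Omega n F V Lam. \<tau> v = b}) / real (card (Omega n F V Lam))"

end

theory Submission
  imports Defs "HOL-Analysis.Harmonic_Numbers" "HOL-Real_Asymp.Real_Asymp"
begin

text \<open>
  Bad variables absorb every high-degree variable and every clause meeting them at least three
  times, so a good clause keeps at least k - 3 good variables, all of degree below Delta, as soon
  as its own variables are nearly distinct. That is the only random input, and it fails with
  probability O(m k^4 / n^2). The rest is deterministic and rests on a counting form of the
  Lovasz Local Lemma on product spaces, with dependency degree at most k Delta.

  For the marking, colour the good variables uniformly from a palette split in proportions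
  q, q, 1 - 2q. An exponential-moment bound makes a good clause unbalanced with probability at
  most 2 rho_m^(k-3) + rho_c^(k-3), and rho 2^(r0 - 2 delta) < 1 makes the local lemma applicable.

  For the marginals, fix the values of the bad variables. The bad clauses lie inside the bad
  variables, so what remains is to avoid violating every good clause on the unassigned good
  variables. Each violation has probability at most 2^(-2 r0 (k-3)), because the V_c-part of the
  clause is never assigned, and the conditional local lemma gives Pr(v = b) <= (1/2) (1 - x)^(-D)
  on every such slice.
\<close>

section \<open>Independence on product spaces\<close>

definition depends_on :: "('v \<Rightarrow> 'b) set \<Rightarrow> ('v \<Rightarrow> 'b) set \<Rightarrow> 'v set \<Rightarrow> bool" where
  "depends_on Om E U \<longleftrightarrow> (\<forall>f\<in>Om. \<forall>g\<in>Om. (\<forall>x\<in>U. f x = g x) \<longrightarrow> (f \<in> E \<longleftrightarrow> g \<in> E))"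

lemma override_on_PiE: "f \<in> PiE X A \<Longrightarrow> g \<in> PiE X A \<Longrightarrow> override_on f g U \<in> PiE X A"
  unfolding override_on_def PiE_def Pi_def extensional_def by auto

text \<open>Exchanging the coordinates in \<open>U\<close> is a bijection \<open>E \<times> G \<rightarrow> (E \<inter> G) \<times> \<Omega>\<close>.\<close>

lemma card_Int_independent:
  assumes fin: "finite (PiE X A)"
    and E: "E \<subseteq> PiE X A" and G: "G \<subseteq> PiE X A"
    and dE: "depends_on (PiE X A) E U" and dG: "depends_on (PiE X A) G V" and disj: "U \<inter> V = {}"
  shows "card (E \<inter> G) * card (PiE X A) = card E * card G"
proof -
  let ?Om = "PiE X A"
  let ?h = "\<lambda>(f,g). (override_on g f U, override_on f g U)"
  have bij: "bij_betw ?h (E \<times> G) ((E \<inter> G) \<times> ?Om)"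
  proof (rule bij_betw_byWitness[where f' = ?h])
    show "\<forall>a\<in>E \<times> G. ?h (?h a) = a"
      by (auto simp: override_on_def fun_eq_iff)
    show "\<forall>a\<in>(E \<inter> G) \<times> ?Om. ?h (?h a) = a"
      by (auto simp: override_on_def fun_eq_iff)
    show "?h ` (E \<times> G) \<subseteq> (E \<inter> G) \<times> ?Om"
    proof clarsimp
      fix f g assume f: "f \<in> E" and g: "g \<in> G"
      have fO: "f \<in> ?Om" and gO: "g \<in> ?Om" using f g E G by auto
      have m1: "override_on g f U \<in> ?Om" "override_on f g U \<in> ?Om" by (simp_all add: override_on_PiE fO gO)
      have "\<forall>x\<in>U. f x = override_on g f U x" by (auto simp: override_on_def)
      hence "override_on g f U \<in> E" using dE fO m1 f unfolding depends_on_def by blast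
      moreover have "\<forall>x\<in>V. g x = override_on g f U x" using disj by (auto simp: override_on_def)
      hence "override_on g f U \<in> G" using dG gO m1 g unfolding depends_on_def by blast
      ultimately show "override_on g f U \<in> E \<and> override_on g f U \<in> G \<and> override_on f g U \<in> ?Om" using m1 by auto
    qed
    show "?h ` ((E \<inter> G) \<times> ?Om) \<subseteq> E \<times> G"
    proof clarsimp
      fix f g assume f: "f \<in> E" "f \<in> G" and gO: "g \<in> ?Om"
      have fO: "f \<in> ?Om" using f E by auto
      have m1: "override_on g f U \<in> ?Om" "override_on f g U \<in> ?Om" by (simp_all add: override_on_PiE fO gO)
      have "\<forall>x\<in>U. f x = override_on g f U x" by (auto simp: override_on_def)
      hence "override_on g f U \<in> E" using dE fO m1 f unfolding depends_on_def by blast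
      moreover have "\<forall>x\<in>V. f x = override_on f g U x" using disj by (auto simp: override_on_def)
      hence "override_on f g U \<in> G" using dG fO m1 f unfolding depends_on_def by blast
      ultimately show "override_on g f U \<in> E \<and> override_on f g U \<in> G" by auto
    qed
  qed
  have "card (E \<times> G) = card ((E \<inter> G) \<times> ?Om)" using bij_betw_same_card[OF bij] .
  thus ?thesis by (simp add: card_cartesian_product)
qed

lemma card_PiE_partly_fixed:
  assumes Y: "finite Y" and T: "T \<subseteq> Y"
  shows "card (PiE Y (\<lambda>y. if y \<in> T then (UNIV :: bool set) else {h y})) = 2 ^ card T"
proof -
  have "card (PiE Y (\<lambda>y. if y \<in> T then (UNIV :: bool set) else {h y}))
      = (\<Prod>y\<in>Y. card (if y \<in> T then (UNIV :: bool set) else {h y}))"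
    using Y by (rule card_PiE)
  also have "\<dots> = (\<Prod>y\<in>Y. if y \<in> T then 2 else 1)"
    by (intro prod.cong) auto
  also have "\<dots> = 2 ^ card (Y \<inter> T)"
    using Y by (simp add: prod.If_cases)
  also have "Y \<inter> T = T" using T by auto
  finally show ?thesis .
qed

section \<open>A counting Lovasz Local Lemma\<close>

definition avoid :: "'a set \<Rightarrow> ('i \<Rightarrow> 'a set) \<Rightarrow> 'i set \<Rightarrow> 'a set" where
  "avoid Om B S = Om - \<Union>(B ` S)"

lemma depends_on_avoid:
  assumes "\<And>j. j \<in> S \<Longrightarrow> depends_on Om (B j) (W j)"
  shows "depends_on Om (avoid Om B S) (\<Union>j\<in>S. W j)"
  unfolding depends_on_def
proof (intro ballI impI)
  fix f g assume f: "f \<in> Om" and g: "g \<in> Om" and fg: "\<forall>x\<in>(\<Union>j\<in>S. W j). f x = g x"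
  have "f \<in> B j \<longleftrightarrow> g \<in> B j" if j: "j \<in> S" for j
    using assms[OF j] f g fg j unfolding depends_on_def by blast
  thus "f \<in> avoid Om B S \<longleftrightarrow> g \<in> avoid Om B S" using f g unfolding avoid_def by blast
qed

lemma card_Int_avoid_independent:
  assumes fin: "finite (PiE X A)" and E: "E \<subseteq> PiE X A" and dE: "depends_on (PiE X A) E U"
    and dB: "\<And>j. j \<in> S \<Longrightarrow> depends_on (PiE X A) (B j) (W j)"
    and disj: "\<And>j. j \<in> S \<Longrightarrow> U \<inter> W j = {}"
  shows "real (card (E \<inter> avoid (PiE X A) B S)) * real (card (PiE X A))
       = real (card E) * real (card (avoid (PiE X A) B S))"
proof -
  have "card (E \<inter> avoid (PiE X A) B S) * card (PiE X A) = card E * card (avoid (PiE X A) B S)"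
    using disj
    by (intro card_Int_independent[OF fin E _ dE depends_on_avoid[OF dB]]) (auto simp: avoid_def)
  then show ?thesis by (metis of_nat_mult)
qed

lemma card_Int_avoid_antimono:
  "finite Om \<Longrightarrow> S \<subseteq> T \<Longrightarrow> card (A \<inter> avoid Om B T) \<le> card (A \<inter> avoid Om B S)"
  unfolding avoid_def by (intro card_mono) auto

lemma card_avoid_peel:
  fixes Om :: "'a set" and B :: "'i \<Rightarrow> 'a set" and x :: real
  assumes fin: "finite Om" and T: "finite T" and x: "x \<le> 1"
    and hyp: "\<And>j R. j \<in> T \<Longrightarrow> R \<subseteq> S2 \<union> T \<Longrightarrow> j \<notin> R \<Longrightarrow>
                 real (card (B j \<inter> avoid Om B R)) \<le> x * real (card (avoid Om B R))"
    and disj: "T \<inter> S2 = {}"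
  shows "(1 - x) ^ card T * real (card (avoid Om B S2)) \<le> real (card (avoid Om B (S2 \<union> T)))"
  using T hyp disj
proof (induction T rule: finite_induct)
  case empty thus ?case by simp
next
  case (insert j T)
  have IH: "(1 - x) ^ card T * real (card (avoid Om B S2)) \<le> real (card (avoid Om B (S2 \<union> T)))"
    using insert.prems by (intro insert.IH) auto
  let ?R = "S2 \<union> T"
  have h: "real (card (B j \<inter> avoid Om B ?R)) \<le> x * real (card (avoid Om B ?R))"
    using insert.prems insert.hyps by (intro insert.prems(1)) auto
  have finR: "finite (avoid Om B ?R)" using fin unfolding avoid_def by auto
  have "avoid Om B (S2 \<union> insert j T) = avoid Om B ?R - (B j \<inter> avoid Om B ?R)"
    by (auto simp: avoid_def)
  hence "card (avoid Om B (S2 \<union> insert j T)) = card (avoid Om B ?R) - card (B j \<inter> avoid Om B ?R)"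
    using finR by (simp add: card_Diff_subset)
  hence c: "real (card (avoid Om B (S2 \<union> insert j T))) = real (card (avoid Om B ?R)) - real (card (B j \<inter> avoid Om B ?R))"
    using finR by (simp add: card_mono of_nat_diff)
  have "(1 - x) ^ card (insert j T) * real (card (avoid Om B S2)) = (1 - x) * ((1 - x) ^ card T * real (card (avoid Om B S2)))"
    using insert.hyps by simp
  also have "\<dots> \<le> (1 - x) * real (card (avoid Om B ?R))"
    using IH x by (intro mult_left_mono) auto
  also have "\<dots> \<le> real (card (avoid Om B (S2 \<union> insert j T)))"
    using c h by (simp add: algebra_simps)
  finally show ?case .
qed

locale counting_lll =
  fixes Om :: "'a set" and B :: "'i \<Rightarrow> 'a set" and I :: "'i set" and N :: "'i \<Rightarrow> 'i set"
    and x :: real and d :: nat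
  assumes finOm: "finite Om" and finI: "finite I"
    and indep: "\<And>i S. i \<in> I \<Longrightarrow> S \<subseteq> I - N i - {i} \<Longrightarrow>
         real (card (B i \<inter> avoid Om B S)) * real (card Om) = real (card (B i)) * real (card (avoid Om B S))"
    and probB: "\<And>i. i \<in> I \<Longrightarrow> real (card (B i)) \<le> x * (1 - x) ^ d * real (card Om)"
    and deg: "\<And>i. i \<in> I \<Longrightarrow> card (N i \<inter> I) \<le> d"
    and x0: "0 \<le> x" and x1: "x < 1"
begin

text \<open>The usual induction: independence disposes of the events outside the neighbourhood of \<open>i\<close>,
  and peeling off the neighbours costs at most \<open>(1 - x) ^ d\<close>.\<close>

lemma card_Int_avoid_le:
  assumes "S \<subseteq> I" "i \<in> I" "i \<notin> S"
  shows "real (card (B i \<inter> avoid Om B S)) \<le> x * real (card (avoid Om B S))"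
  using assms
proof (induction "card S" arbitrary: S i rule: less_induct)
  case less
  define S1 where "S1 = S \<inter> N i"
  define S2 where "S2 = S - N i"
  have finS: "finite S" using less.prems finI finite_subset by blast
  have S: "S = S2 \<union> S1" "S1 \<inter> S2 = {}" unfolding S1_def S2_def by auto
  have peel: "(1 - x) ^ card S1 * real (card (avoid Om B S2)) \<le> real (card (avoid Om B S))"
    unfolding S(1)
  proof (rule card_avoid_peel[OF finOm])
    show "finite S1" "x \<le> 1" "S1 \<inter> S2 = {}" using finS S x1 by auto
    fix j R assume j: "j \<in> S1" and R: "R \<subseteq> S2 \<union> S1" and jR: "j \<notin> R"
    have "R \<subset> S" using R j jR S by auto
    hence "card R < card S" using finS psubset_card_mono by blast
    thus "real (card (B j \<inter> avoid Om B R)) \<le> x * real (card (avoid Om B R))"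
      using less.hyps[of R j] R j jR S less.prems by auto
  qed
  have "card S1 \<le> card (N i \<inter> I)" using less.prems finI unfolding S1_def by (intro card_mono) auto
  hence "(1 - x) ^ d \<le> (1 - x) ^ card S1"
    using deg[OF less.prems(2)] x0 x1 by (intro power_decreasing) auto
  hence probB': "real (card (B i)) \<le> x * (1 - x) ^ card S1 * real (card Om)"
    using probB[OF less.prems(2)] x0 by (meson mult_left_mono mult_right_mono of_nat_0_le_iff order_trans)
  have "real (card (B i \<inter> avoid Om B S)) * real (card Om)
      \<le> real (card (B i \<inter> avoid Om B S2)) * real (card Om)"
    using card_Int_avoid_antimono[OF finOm, of S2 S] unfolding S2_def by (intro mult_right_mono) auto
  also have "\<dots> = real (card (B i)) * real (card (avoid Om B S2))"
    using less.prems by (intro indep) (auto simp: S2_def)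
  also have "\<dots> \<le> x * real (card Om) * ((1 - x) ^ card S1 * real (card (avoid Om B S2)))"
    using mult_right_mono[OF probB', of "real (card (avoid Om B S2))"] by (simp add: mult_ac)
  also have "\<dots> \<le> x * real (card Om) * real (card (avoid Om B S))"
    using peel x0 by (intro mult_left_mono) auto
  also have "\<dots> = x * real (card (avoid Om B S)) * real (card Om)"
    by (simp add: mult_ac)
  finally have le: "real (card (B i \<inter> avoid Om B S)) * real (card Om)
      \<le> x * real (card (avoid Om B S)) * real (card Om)" .
  show ?case
  proof (cases "Om = {}")
    case True
    then show ?thesis by (simp add: avoid_def)
  next
    case False
    then show ?thesis using le finOm by (intro mult_right_le_imp_le[OF le]) (simp add: card_gt_0_iff)
  qed
qed

lemma card_avoid_lower:
  assumes S: "S \<subseteq> I" shows "(1 - x) ^ card S * real (card Om) \<le> real (card (avoid Om B S))"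
proof -
  have "(1 - x) ^ card S * real (card (avoid Om B {})) \<le> real (card (avoid Om B ({} \<union> S)))"
  proof (rule card_avoid_peel[OF finOm])
    show "finite S" using S finI finite_subset by blast
    show "x \<le> 1" using x1 by simp
    show "S \<inter> {} = {}" by simp
    fix j R assume "j \<in> S" "R \<subseteq> {} \<union> S" "j \<notin> R"
    thus "real (card (B j \<inter> avoid Om B R)) \<le> x * real (card (avoid Om B R))"
      using card_Int_avoid_le[of R j] S by auto
  qed
  thus ?thesis by (simp add: avoid_def)
qed

lemma avoid_nonempty: "Om \<noteq> {} \<Longrightarrow> avoid Om B I \<noteq> {}"
proof
  assume "Om \<noteq> {}" "avoid Om B I = {}"
  have "(1 - x) ^ card I * real (card Om) \<le> 0" using card_avoid_lower[of I] \<open>avoid Om B I = {}\<close> by simp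
  moreover have "(1 - x) ^ card I * real (card Om) > 0" using x1 finOm \<open>Om \<noteq> {}\<close>
    by (simp add: card_gt_0_iff)
  ultimately show False by simp
qed

lemma card_Int_avoid_conditional:
  assumes indA: "\<And>S. S \<subseteq> I - NA \<Longrightarrow>
        real (card (A \<inter> avoid Om B S)) * real (card Om) = real (card A) * real (card (avoid Om B S))"
  shows "real (card (A \<inter> avoid Om B I)) * (1 - x) ^ card (NA \<inter> I) * real (card Om)
          \<le> real (card A) * real (card (avoid Om B I))"
proof -
  define S2 where "S2 = I - NA"
  define T where "T = NA \<inter> I"
  have I: "I = S2 \<union> T" "T \<inter> S2 = {}" unfolding S2_def T_def by auto
  have peel: "(1 - x) ^ card T * real (card (avoid Om B S2)) \<le> real (card (avoid Om B I))"
    unfolding I(1)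
  proof (rule card_avoid_peel[OF finOm])
    show "finite T" using finI by (simp add: T_def)
    show "x \<le> 1" using x1 by simp
    show "T \<inter> S2 = {}" by (fact I(2))
    fix j R assume "j \<in> T" "R \<subseteq> S2 \<union> T" "j \<notin> R"
    thus "real (card (B j \<inter> avoid Om B R)) \<le> x * real (card (avoid Om B R))"
      using card_Int_avoid_le I by auto
  qed
  have "real (card (A \<inter> avoid Om B I)) \<le> real (card (A \<inter> avoid Om B S2))"
    using card_Int_avoid_antimono[OF finOm, of S2 I] unfolding S2_def by auto
  from mult_right_mono[OF this, of "(1 - x) ^ card T * real (card Om)"]
  have "real (card (A \<inter> avoid Om B I)) * (1 - x) ^ card T * real (card Om)
        \<le> real (card (A \<inter> avoid Om B S2)) * real (card Om) * (1 - x) ^ card T"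
    using x1 by (simp add: mult_ac)
  also have "\<dots> = real (card A) * ((1 - x) ^ card T * real (card (avoid Om B S2)))"
    using indA[of S2] by (simp add: S2_def algebra_simps)
  also have "\<dots> \<le> real (card A) * real (card (avoid Om B I))"
    using peel by (intro mult_left_mono) auto
  finally show ?thesis unfolding T_def .
qed
end

lemma counting_lll_product:
  assumes fin: "finite (PiE X A)" and "finite I"
    and sub: "\<And>i. i \<in> I \<Longrightarrow> B i \<subseteq> PiE X A"
    and dep: "\<And>i. i \<in> I \<Longrightarrow> depends_on (PiE X A) (B i) (W i)"
    and "\<And>i. i \<in> I \<Longrightarrow> real (card (B i)) \<le> x * (1 - x) ^ d * real (card (PiE X A))"
    and "\<And>i. i \<in> I \<Longrightarrow> card ({j. W j \<inter> W i \<noteq> {}} \<inter> I) \<le> d"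
    and "0 \<le> x" "x < 1"
  shows "counting_lll (PiE X A) B I (\<lambda>i. {j. W j \<inter> W i \<noteq> {}}) x d"
proof
  fix i S assume i: "i \<in> I" and S: "S \<subseteq> I - {j. W j \<inter> W i \<noteq> {}} - {i}"
  show "real (card (B i \<inter> avoid (PiE X A) B S)) * real (card (PiE X A))
      = real (card (B i)) * real (card (avoid (PiE X A) B S))"
  proof (rule card_Int_avoid_independent[OF fin sub[OF i] dep[OF i]])
    show "depends_on (PiE X A) (B j) (W j)" "W i \<inter> W j = {}" if "j \<in> S" for j
      using that S dep by auto
  qed
qed (use assms in auto)

section \<open>Exponential-moment bound for colourings\<close>

lemma prod_if_power:
  assumes "finite X"
  shows "(\<Prod>y\<in>X. if P y then (a::real) else b) = a ^ card {y\<in>X. P y} * b ^ card {y\<in>X. \<not> P y}"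
proof -
  have "(\<Prod>y\<in>X. if P y then a else b) = (\<Prod>y\<in>X \<inter> {y. P y}. a) * (\<Prod>y\<in>X \<inter> - {y. P y}. b)"
    using assms by (rule prod.If_cases)
  also have "X \<inter> {y. P y} = {y\<in>X. P y}" by auto
  also have "X \<inter> - {y. P y} = {y\<in>X. \<not> P y}" by auto
  finally show ?thesis by simp
qed

lemma sum_weight_colours:
  assumes H: "H \<subseteq> {0..<Nn}"
  shows "(\<Sum>a\<in>{0..<Nn}. if a \<in> H then s else 1) = real (card H) * s + real (Nn - card H)"
proof -
  have "(\<Sum>a\<in>{0..<Nn}. if a \<in> H then s else 1)
      = s * real (card ({0..<Nn} \<inter> H)) + real (card ({0..<Nn} - H))"
    by (simp add: sum.If_cases Diff_eq)
  also have "{0..<Nn} \<inter> H = H" using H by auto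
  also have "card ({0..<Nn} - H) = Nn - card H" using H by (simp add: card_Diff_subset finite_subset)
  finally show ?thesis by (simp add: mult.commute)
qed

text \<open>Markov's inequality for \<open>s ^ #hits\<close>, whose sum over all colourings factorises over the
  coordinates.\<close>

lemma card_few_hits_powr_le:
  fixes X W :: "'a set" and H :: "nat set" and Nn :: nat and s t :: real
  assumes X: "finite X" and WX: "W \<subseteq> X" and H: "H \<subseteq> {0..<Nn}" and s0: "0 < s" and s1: "s \<le> 1"
  shows "real (card {f \<in> PiE X (\<lambda>_. {0..<Nn}). real (card {y\<in>W. f y \<in> H}) < t}) * s powr t
      \<le> (real (card H) * s + real (Nn - card H)) ^ card W * real Nn ^ card (X - W)"
proof -
  define Om where "Om = PiE X (\<lambda>_. {0..<Nn})"
  define E where "E = {f \<in> Om. real (card {y\<in>W. f y \<in> H}) < t}"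
  define g where "g y a = (if y \<in> W \<and> a \<in> H then s else 1)" for y a
  have finOm: "finite Om" unfolding Om_def using X by (intro finite_PiE) auto
  have finW: "finite W" using WX X finite_subset by auto
  have cnt: "s ^ card {y\<in>W. f y \<in> H} = (\<Prod>y\<in>X. g y (f y))" for f
  proof -
    have "(\<Prod>y\<in>X. g y (f y)) = s ^ card {y\<in>X. y \<in> W \<and> f y \<in> H} * 1 ^ card {y\<in>X. \<not> (y \<in> W \<and> f y \<in> H)}"
      unfolding g_def using X by (rule prod_if_power)
    also have "{y\<in>X. y \<in> W \<and> f y \<in> H} = {y\<in>W. f y \<in> H}" using WX by auto
    finally show ?thesis by simp
  qed
  have "real (card E) * s powr t = (\<Sum>f\<in>E. s powr t)" by simp
  also have "\<dots> \<le> (\<Sum>f\<in>E. s ^ card {y\<in>W. f y \<in> H})"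
  proof (intro sum_mono)
    fix f assume "f \<in> E"
    hence lt: "real (card {y\<in>W. f y \<in> H}) \<le> t" unfolding E_def by auto
    have "s powr t \<le> s powr real (card {y\<in>W. f y \<in> H})"
      using s0 s1 lt by (intro powr_mono') auto
    thus "s powr t \<le> s ^ card {y\<in>W. f y \<in> H}" using s0 by (simp add: powr_realpow)
  qed
  also have "\<dots> \<le> (\<Sum>f\<in>Om. s ^ card {y\<in>W. f y \<in> H})"
    using finOm s0 unfolding E_def by (intro sum_mono2) auto
  also have "\<dots> = (\<Sum>f\<in>Om. \<Prod>y\<in>X. g y (f y))" by (simp add: cnt)
  also have "\<dots> = (\<Prod>y\<in>X. \<Sum>a\<in>{0..<Nn}. g y a)"
    unfolding Om_def by (rule prod_sum_PiE[symmetric]) (use X in auto)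
  also have "\<dots> = (\<Prod>y\<in>X. if y \<in> W then real (card H) * s + real (Nn - card H) else real Nn)"
    by (intro prod.cong refl) (simp add: g_def sum_weight_colours[OF H])
  also have "\<dots> = (real (card H) * s + real (Nn - card H)) ^ card {y\<in>X. y \<in> W} * real Nn ^ card {y\<in>X. y \<notin> W}"
    using X by (rule prod_if_power)
  also have "{y\<in>X. y \<in> W} = W" using WX by auto
  also have "{y\<in>X. y \<notin> W} = X - W" by auto
  finally show ?thesis unfolding E_def Om_def .
qed

lemma card_few_hits_le:
  fixes X W :: "'a set" and H :: "nat set" and Nn L :: nat and s c beta :: real
  assumes X: "finite X" and WX: "W \<subseteq> X" and H: "H \<subseteq> {0..<Nn}" and s0: "0 < s" and s1: "s \<le> 1"
    and Nn: "Nn > 0" and beta: "beta = (real (card H) * s + real (Nn - card H)) / real Nn"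
    and L: "L \<le> card W"
  shows "real (card {f \<in> PiE X (\<lambda>_. {0..<Nn}). real (card {y\<in>W. f y \<in> H}) < c * real L})
      \<le> (s powr (-c) * beta) ^ L * real (card (PiE X (\<lambda>_. {0..<Nn})))"
proof -
  define E where "E = {f \<in> PiE X (\<lambda>_. {0..<Nn}). real (card {y\<in>W. f y \<in> H}) < c * real L}"
  have ch: "real (card E) * s powr (c * real L) \<le> (real (card H) * s + real (Nn - card H)) ^ card W * real Nn ^ card (X - W)"
    unfolding E_def by (rule card_few_hits_powr_le[OF X WX H s0 s1])
  have cH: "card H \<le> Nn" using H by (metis card_atLeastLessThan card_mono finite_atLeastLessThan minus_nat.diff_0)
  have b0: "0 \<le> beta" unfolding beta using s0 by auto
  have b1: "beta \<le> 1"
  proof -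
    have "real (card H) * s \<le> real (card H)" using s1 by (simp add: mult_left_le)
    hence "real (card H) * s + real (Nn - card H) \<le> real Nn" using cH by (simp add: of_nat_diff)
    thus ?thesis unfolding beta using Nn by (simp add: divide_le_eq_1)
  qed
  have e1: "real (card H) * s + real (Nn - card H) = beta * real Nn" unfolding beta using Nn by simp
  have cX: "card X = card W + card (X - W)" using WX X
    by (metis card_Diff_subset card_mono finite_subset le_add_diff_inverse)
  have cOm: "real (card (PiE X (\<lambda>_. {0..<Nn}))) = real Nn ^ card W * real Nn ^ card (X - W)"
    using X by (simp add: card_PiE cX power_add)
  have "real (card E) * s powr (c * real L) \<le> beta ^ card W * real (card (PiE X (\<lambda>_. {0..<Nn})))"
    using ch unfolding e1 cOm by (simp add: power_mult_distrib mult_ac)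
  also have "\<dots> \<le> beta ^ L * real (card (PiE X (\<lambda>_. {0..<Nn})))"
    using b0 b1 L by (intro mult_right_mono power_decreasing) auto
  finally have *: "real (card E) * s powr (c * real L) \<le> beta ^ L * real (card (PiE X (\<lambda>_. {0..<Nn})))" .
  have sp: "s powr (c * real L) > 0" using s0 by simp
  have "real (card E) \<le> beta ^ L * real (card (PiE X (\<lambda>_. {0..<Nn}))) / s powr (c * real L)"
    using * sp by (simp add: field_simps)
  also have "\<dots> = (s powr (-c)) ^ L * beta ^ L * real (card (PiE X (\<lambda>_. {0..<Nn})))"
  proof -
    have "(s powr (-c)) ^ L = s powr (- (c * real L))"
      using s0 by (simp add: powr_realpow[symmetric] powr_powr)
    thus ?thesis using s0 by (simp add: powr_minus field_simps)
  qed
  finally show ?thesis unfolding E_def by (simp add: power_mult_distrib)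
qed

section \<open>Numerical constants\<close>

definition power_series_part :: "(nat \<Rightarrow> real) \<Rightarrow> real \<Rightarrow> nat \<Rightarrow> real" where
  "power_series_part f z n = (\<Sum>k<n. f k * z^k)"

text \<open>Horner-style unfolding, so that \<open>simp\<close> evaluates the truncated series below exactly.\<close>

lemma power_series_part_numeral:
  "power_series_part f z (numeral n) = f 0 + power_series_part (\<lambda>k. f (k+1)) z (pred_numeral n) * z"
  "power_series_part f z (Suc 0) = f 0"
  "power_series_part f z 0 = 0"
proof -
  have *: "(\<Sum>k<Suc m. f k * z ^ k) = f 0 + (\<Sum>k<m. f (k + 1) * z ^ k) * z" for m
    by (subst sum.lessThan_Suc_shift) (simp add: sum_distrib_right sum_distrib_left mult_ac)
  show "power_series_part f z (numeral n) = f 0 + power_series_part (\<lambda>k. f (k+1)) z (pred_numeral n) * z"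
    using *[of "pred_numeral n"] by (simp add: numeral_eq_Suc power_series_part_def)
qed (simp_all add: power_series_part_def)

lemma ln_series_bounds:
  fixes x :: real and n :: nat
  assumes x: "x > 1" and y: "y = (x-1)/(x+1)" and z: "z = y^2"
  shows "2*y * power_series_part (\<lambda>k. inverse (real (2*k+1))) z n \<le> ln x"
    "ln x \<le> 2*y * power_series_part (\<lambda>k. inverse (real (2*k+1))) z n + 2 * (y * z^n / (1 - z) / real (2*n+1))"
proof -
  have h: "(\<Sum>k<n. 2*y^(2*k+1) / of_nat (2*k+1)) \<le> ln x \<and>
      ln x \<le> (\<Sum>k<n. 2*y^(2*k+1) / of_nat (2*k+1)) + 2*(y^(2*n+1) / (1 - y^2) / of_nat (2*n+1))"
    using ln_approx_bounds[OF x, of n] unfolding y atLeastAtMost_iff by blast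
  have e: "2*y * power_series_part (\<lambda>k. inverse (real (2*k+1))) z n = (\<Sum>k<n. 2*y^(2*k+1) / of_nat (2*k+1))"
    unfolding power_series_part_def z
    by (subst sum_distrib_left) (simp add: field_simps power_mult[symmetric] mult_ac)
  have e3: "y^(2*n) = z^n" unfolding z by (simp add: power_mult)
  show "2*y * power_series_part (\<lambda>k. inverse (real (2*k+1))) z n \<le> ln x"
    using h e by simp
  show "ln x \<le> 2*y * power_series_part (\<lambda>k. inverse (real (2*k+1))) z n + 2 * (y * z^n / (1 - z) / real (2*n+1))"
    using h e e3 by (simp add: z[symmetric])
qed

lemma ln_3_le: "ln (3::real) \<le> 1.0986123"
  by (rule order.trans[OF ln_series_bounds(2)[of 3 "1/2" "1/4" 14]])
    (simp_all add: power_series_part_numeral power2_eq_square power_divide)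

lemma ln_2_le: "ln (2::real) \<le> 0.69314719"
  by (rule order.trans[OF ln_series_bounds(2)[of 2 "1/3" "1/9" 10]])
    (simp_all add: power_series_part_numeral power2_eq_square power_divide)

lemma ln_100_div_41_le: "ln (100/41::real) \<le> 0.8915982"
  by (rule order.trans[OF ln_series_bounds(2)[of "100/41" "59/141" "(59/141)^2" 10]])
    (simp_all add: power_series_part_numeral power2_eq_square power_divide)

lemma ln_rho_m_factor_ge: "0.2111441 \<le> ln (3000000/2428972::real)"
  by (rule order.trans[OF _ ln_series_bounds(1)[of "3000000/2428972" "571028/5428972" "(571028/5428972)^2" 6]])
    (simp_all add: power_series_part_numeral power2_eq_square power_divide)

lemma ln_rho_c_factor_ge: "0.2918152 \<le> ln (100000000/74690652::real)"
  by (rule order.trans[OF _ ln_series_bounds(1)[of "100000000/74690652" "25309348/174690652" "(25309348/174690652)^2" 6]])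
    (simp_all add: power_series_part_numeral power2_eq_square power_divide)

text \<open>The marking colours a good variable \<open>m\<close> or \<open>a\<close> with probability \<open>q\<close> each and \<open>c\<close>
  otherwise. By an exponential moment with parameter \<open>s\<close>, fewer than \<open>\<theta> L\<close> hits of a class
  of density \<open>p\<close> among \<open>L\<close> variables have probability at most
  \<open>(s powr -\<theta> * (p s + 1 - p)) ^ L\<close>; \<open>\<rho>\<^sub>m\<close> and \<open>\<rho>\<^sub>c\<close> are this base for
  \<open>(p, \<theta>, s) = (q, r0, 1/3)\<close> and \<open>(1 - 2q, 2 r0, 41/100)\<close>.\<close>

definition mark_density :: real where "mark_density = 285514 / 1000000"
definition rho_m :: real where "rho_m = 3 powr r0 * (1 - 2 * mark_density / 3)"
definition rho_c :: real where "rho_c = (100/41) powr (2 * r0) * (2 * mark_density + (1 - 2 * mark_density) * (41/100))"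

lemma rho_m_bound: "rho_m * 2 powr (r0 - 2 * delta) < 1"
proof -
  have A: "1 - 2 * mark_density / 3 = inverse (3000000/2428972)" by (simp add: mark_density_def)
  have "ln (1 - 2 * mark_density / 3) = - ln (3000000/2428972)" unfolding A by (intro ln_inverse)
  hence "ln (1 - 2 * mark_density / 3) \<le> - 0.2111441" using ln_rho_m_factor_ge by simp
  moreover have "r0 * ln 3 \<le> r0 * 1.0986123" using ln_3_le by (simp add: r0_def)
  moreover have "(r0 - 2 * delta) * ln 2 \<le> (r0 - 2 * delta) * 0.69314719"
    using ln_2_le by (simp add: r0_def delta_def)
  ultimately have neg: "r0 * ln 3 + ln (1 - 2 * mark_density / 3) + (r0 - 2 * delta) * ln 2 < 0"
    by (simp add: r0_def delta_def)
  have pos: "1 - 2 * mark_density / 3 > 0" by (simp add: mark_density_def)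
  have "rho_m * 2 powr (r0 - 2 * delta) = exp (r0 * ln 3 + ln (1 - 2 * mark_density / 3) + (r0 - 2 * delta) * ln 2)"
    unfolding rho_m_def powr_def using pos by (simp add: exp_add)
  also have "\<dots> < 1" using neg by simp
  finally show ?thesis .
qed

lemma rho_c_bound: "rho_c * 2 powr (r0 - 2 * delta) < 1"
proof -
  have A: "2 * mark_density + (1 - 2 * mark_density) * (41/100) = inverse (100000000/74690652)" by (simp add: mark_density_def)
  have "ln (2 * mark_density + (1 - 2 * mark_density) * (41/100)) = - ln (100000000/74690652)" unfolding A by (intro ln_inverse)
  hence "ln (2 * mark_density + (1 - 2 * mark_density) * (41/100)) \<le> - 0.2918152" using ln_rho_c_factor_ge by simp
  moreover have "2 * r0 * ln (100/41) \<le> 2 * r0 * 0.8915982" using ln_100_div_41_le by (simp add: r0_def)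
  moreover have "(r0 - 2 * delta) * ln 2 \<le> (r0 - 2 * delta) * 0.69314719"
    using ln_2_le by (simp add: r0_def delta_def)
  ultimately have neg: "2 * r0 * ln (100/41) + ln (2 * mark_density + (1 - 2 * mark_density) * (41/100)) + (r0 - 2 * delta) * ln 2 < 0"
    by (simp add: r0_def delta_def)
  have pos: "2 * mark_density + (1 - 2 * mark_density) * (41/100) > 0" by (simp add: mark_density_def)
  have "rho_c * 2 powr (r0 - 2 * delta) = exp (2 * r0 * ln (100/41) + ln (2 * mark_density + (1 - 2 * mark_density) * (41/100)) + (r0 - 2 * delta) * ln 2)"
    unfolding rho_c_def powr_def using pos by (simp add: exp_add)
  also have "\<dots> < 1" using neg by simp
  finally show ?thesis .
qed

section \<open>Bad variables and degrees\<close>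

lemma finite_var_cl[simp]: "finite (var_cl c)"
  unfolding var_cl_def by simp

lemma card_var_cl_le: "card (var_cl c) \<le> length c"
  unfolding var_cl_def by (metis card_image_le card_length finite_set le_trans)

lemma V_iter_mono: "i \<le> j \<Longrightarrow> V_iter k n F i \<subseteq> V_iter k n F j"
proof (induction j)
  case 0 thus ?case by simp
next
  case (Suc j)
  thus ?case by (cases "i = Suc j") auto
qed

lemma V_iter_subset_V_bad: "V_iter k n F i \<subseteq> V_bad k n F"
  unfolding V_bad_def by auto

lemma finite_subset_V_iter:
  "finite S \<Longrightarrow> S \<subseteq> V_bad k n F \<Longrightarrow> \<exists>i. S \<subseteq> V_iter k n F i"
proof (induction S rule: finite_induct)
  case empty thus ?case by simp
next
  case (insert x S)
  then obtain i where i: "S \<subseteq> V_iter k n F i" by auto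
  from insert.prems obtain j where j: "x \<in> V_iter k n F j" unfolding V_bad_def by auto
  have "S \<subseteq> V_iter k n F (max i j)" using i V_iter_mono[of i "max i j" k n F] by auto
  moreover have "x \<in> V_iter k n F (max i j)" using j V_iter_mono[of j "max i j"] by auto
  ultimately show ?case by auto
qed

lemma C_bad_var_cl:
  assumes "j \<in> C_bad k n F"
  shows "j < length F" "var_cl (F ! j) \<subseteq> V_bad k n F"
proof -
  from assms have j: "j < length F" and c: "card (var_cl (F ! j) \<inter> V_bad k n F) \<ge> 3"
    unfolding C_bad_def clauses_hit_def by auto
  show "j < length F" by fact
  obtain i where i: "var_cl (F ! j) \<inter> V_bad k n F \<subseteq> V_iter k n F i"
    using finite_subset_V_iter[of "var_cl (F ! j) \<inter> V_bad k n F" k n F] by auto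
  have "card (var_cl (F ! j) \<inter> V_bad k n F) \<le> card (var_cl (F ! j) \<inter> V_iter k n F i)"
    using i by (intro card_mono) auto
  with c have "j \<in> clauses_hit F (V_iter k n F i)" using j unfolding clauses_hit_def by auto
  hence "var_cl (F ! j) \<subseteq> V_iter k n F (Suc i)" by auto
  thus "var_cl (F ! j) \<subseteq> V_bad k n F" using V_iter_subset_V_bad[of k n F "Suc i"] by auto
qed

lemma kcnf_clause:
  assumes "F \<in> kcnf_formulas k n m" "j < length F"
  shows "length (F ! j) = k" "var_cl (F ! j) \<subseteq> {0..<n}" "card (var_cl (F ! j)) \<le> k"
proof -
  have c: "F ! j \<in> set F" using assms by auto
  show "length (F ! j) = k" using assms c unfolding kcnf_formulas_def by auto
  have "\<forall>l\<in>set (F ! j). fst l < n" using assms(1) c unfolding kcnf_formulas_def by blast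
  thus "var_cl (F ! j) \<subseteq> {0..<n}" unfolding var_cl_def by auto
  show "card (var_cl (F ! j)) \<le> k" using card_var_cl_le[of "F ! j"] \<open>length (F ! j) = k\<close> by simp
qed

lemma V_iter_subset:
  assumes "F \<in> kcnf_formulas k n m"
  shows "V_iter k n F i \<subseteq> {0..<n}"
proof (induction i)
  case 0 thus ?case by (auto simp: high_deg_def)
next
  case (Suc i)
  have "var_cl (F ! j) \<subseteq> {0..<n}" if "j \<in> clauses_hit F (V_iter k n F i)" for j
    using that kcnf_clause(2)[OF assms] unfolding clauses_hit_def by auto
  thus ?case using Suc by auto
qed

lemma V_bad_subset:
  assumes "F \<in> kcnf_formulas k n m"
  shows "V_bad k n F \<subseteq> {0..<n}"
  using V_iter_subset[OF assms] unfolding V_bad_def by auto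

lemma V_good_degree_less:
  assumes "y \<in> V_good k n F"
  shows "int (degree F y) < Delta k"
proof -
  have "y \<notin> V_iter k n F 0" using assms V_iter_subset_V_bad[of k n F 0] unfolding V_good_def by auto
  moreover have "y < n" using assms unfolding V_good_def by auto
  ultimately show ?thesis by (auto simp: high_deg_def)
qed

lemma C_good_card_bad_le_2:
  assumes "j \<in> C_good k n F"
  shows "j < length F" "card (var_cl (F ! j) \<inter> V_bad k n F) \<le> 2"
  using assms unfolding C_good_def C_bad_def clauses_hit_def by auto

lemma degree_nth: "degree F y = (\<Sum>j<length F. length (filter (\<lambda>l. fst l = y) (F ! j)))"
proof -
  have "degree F y = sum_list (map (\<lambda>c. length (filter (\<lambda>l. fst l = y) c)) F)"
    unfolding degree_def by simp
  also have "\<dots> = (\<Sum>j = 0..<length F. length (filter (\<lambda>l. fst l = y) (F ! j)))"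
    by (subst sum_list_sum_nth) simp
  finally show ?thesis by (simp add: atLeast0LessThan)
qed

lemma card_clauses_with_var:
  "card {j. j < length F \<and> y \<in> var_cl (F ! j)} \<le> degree F y"
proof -
  have "card {j. j < length F \<and> y \<in> var_cl (F ! j)} = (\<Sum>j\<in>{j\<in>{..<length F}. y \<in> var_cl (F ! j)}. (1::nat))"
    by simp
  also have "\<dots> = (\<Sum>j<length F. if y \<in> var_cl (F ! j) then 1 else 0)"
    by (subst sum.inter_filter) auto
  also have "\<dots> \<le> (\<Sum>j<length F. length (filter (\<lambda>l. fst l = y) (F ! j)))"
  proof (intro sum_mono)
    fix j
    show "(if y \<in> var_cl (F ! j) then 1 else 0) \<le> length (filter (\<lambda>l. fst l = y) (F ! j))"
    proof (cases "y \<in> var_cl (F ! j)")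
      case True
      then obtain l where "l \<in> set (F ! j)" "fst l = y" unfolding var_cl_def by auto
      hence "filter (\<lambda>l. fst l = y) (F ! j) \<noteq> []" by (auto simp: filter_empty_conv)
      thus ?thesis using True by (cases "filter (\<lambda>l. fst l = y) (F ! j)") auto
    qed simp
  qed
  also have "\<dots> = degree F y" by (rule degree_nth[symmetric])
  finally show ?thesis .
qed

lemma Delta_bounds:
  "Delta k \<ge> 1" "real_of_int (Delta k) < 2 powr ((r0 - 2 * delta) * real k) + 1"
proof -
  have p: "2 powr ((r0 - 2 * delta) * real k) \<ge> 1"
    unfolding r0_def delta_def by (intro ge_one_powr_ge_zero) auto
  show "Delta k \<ge> 1" unfolding Delta_def using p by (simp add: le_ceiling_iff)
  show "real_of_int (Delta k) < 2 powr ((r0 - 2 * delta) * real k) + 1"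
    unfolding Delta_def by linarith
qed

lemma V_good_degree_le:
  assumes "y \<in> V_good k n F"
  shows "degree F y \<le> nat (Delta k) - 1"
  using V_good_degree_less[OF assms] Delta_bounds(1)[of k] by linarith

lemma card_clauses_meeting_le:
  assumes F: "F \<in> kcnf_formulas k n m" and j: "j < length F"
    and deg: "\<And>y. y \<in> G \<Longrightarrow> degree F y \<le> D"
  shows "card {j'. j' < length F \<and> var_cl (F ! j') \<inter> var_cl (F ! j) \<inter> G \<noteq> {}} \<le> k * D"
proof -
  let ?C = "\<lambda>y. {j'. j' < length F \<and> y \<in> var_cl (F ! j')}"
  have "card {j'. j' < length F \<and> var_cl (F ! j') \<inter> var_cl (F ! j) \<inter> G \<noteq> {}}
      \<le> card (\<Union>y\<in>var_cl (F ! j) \<inter> G. ?C y)"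
    by (intro card_mono finite_UN_I) auto
  also have "\<dots> \<le> (\<Sum>y\<in>var_cl (F ! j) \<inter> G. card (?C y))"
    by (intro card_UN_le) simp
  also have "\<dots> \<le> (\<Sum>y\<in>var_cl (F ! j) \<inter> G. D)"
    using deg by (intro sum_mono order.trans[OF card_clauses_with_var]) auto
  also have "\<dots> \<le> k * D"
    using kcnf_clause(3)[OF F j] card_mono[of "var_cl (F ! j)" "var_cl (F ! j) \<inter> G"] by simp
  finally show ?thesis .
qed

section \<open>Existence of a marking\<close>

definition palette :: "nat" where
  "palette = 1000000"
definition class_size :: "nat" where
  "class_size = 285514"

locale marking_existence =
  fixes k n m :: nat and F :: cnf and D :: nat and x :: real
  assumes F: "F \<in> kcnf_formulas k n m"
    and dist: "\<And>j. j < length F \<Longrightarrow> k - 1 \<le> card (var_cl (F ! j))"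
    and k3: "k \<ge> 3"
    and Dg: "\<And>y. y \<in> V_good k n F \<Longrightarrow> degree F y \<le> D"
    and x0: "0 \<le> x" and x1: "x < 1"
    and lll: "2 * rho_m ^ (k - 3) + rho_c ^ (k - 3) \<le> x * (1 - x) ^ (k * D)"
begin

definition Good :: "nat set" where
  "Good = V_good k n F"
definition Colourings :: "(nat \<Rightarrow> nat) set" where
  "Colourings = PiE Good (\<lambda>_. {0..<palette})"
definition W :: "nat \<Rightarrow> nat set" where
  "W j = var_cl (F ! j) \<inter> Good"
definition Hm :: "nat set" where
  "Hm = {0..<class_size}"
definition Ha :: "nat set" where
  "Ha = {class_size..<2*class_size}"
definition Hc :: "nat set" where
  "Hc = {2*class_size..<palette}"
definition Few :: "nat set \<Rightarrow> real \<Rightarrow> nat \<Rightarrow> (nat \<Rightarrow> nat) set" where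
  "Few H t j = {f \<in> Colourings. real (card {y\<in>W j. f y \<in> H}) < t}"
definition Unbalanced :: "nat \<Rightarrow> (nat \<Rightarrow> nat) set" where
  "Unbalanced j = Few Hm (r0 * real (k - 3)) j \<union> Few Ha (r0 * real (k - 3)) j \<union> Few Hc (2 * r0 * real (k - 3)) j"
definition I :: "nat set" where
  "I = C_good k n F"
definition Nb :: "nat \<Rightarrow> nat set" where
  "Nb j = {j'. W j' \<inter> W j \<noteq> {}}"

lemma finite_Good: "finite Good" unfolding Good_def V_good_def by auto

lemma finite_Colourings[simp]: "finite Colourings" unfolding Colourings_def using finite_Good by (intro finite_PiE) auto

lemma card_W: assumes j: "j \<in> I" shows "k - 3 \<le> card (W j)"
proof -
  have jl: "j < length F" and b2: "card (var_cl (F ! j) \<inter> V_bad k n F) \<le> 2"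
    using C_good_card_bad_le_2[of j k n F] j unfolding I_def by auto
  have vs: "var_cl (F ! j) \<subseteq> {0..<n}" using kcnf_clause(2)[OF F jl] .
  have "W j = var_cl (F ! j) - (var_cl (F ! j) \<inter> V_bad k n F)"
    unfolding W_def Good_def V_good_def using vs by auto
  hence "card (W j) = card (var_cl (F ! j)) - card (var_cl (F ! j) \<inter> V_bad k n F)"
    by (simp add: card_Diff_subset)
  thus ?thesis using dist[OF jl] b2 by linarith
qed

lemma W_Good: "W j \<subseteq> Good" unfolding W_def by auto

lemma card_Few:
  assumes j: "j \<in> I" and H: "H \<subseteq> {0..<palette}" and s0: "0 < s" and s1: "s \<le> 1"
    and beta: "beta = (real (card H) * s + real (palette - card H)) / real palette"
  shows "real (card (Few H (c * real (k - 3)) j)) \<le> (s powr (-c) * beta) ^ (k - 3) * real (card Colourings)"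
  unfolding Few_def Colourings_def
  by (rule card_few_hits_le[OF finite_Good W_Good H s0 s1 _ beta card_W[OF j]]) (simp add: palette_def)

lemma rho_m_eq: "(1/3) powr (-r0) * ((real (card Hm) * (1/3) + real (palette - card Hm)) / real palette) = rho_m"
  unfolding rho_m_def Hm_def palette_def class_size_def mark_density_def by (simp add: powr_minus powr_divide)

lemma rho_c_eq: "(41/100) powr (-(2 * r0)) * ((real (card Hc) * (41/100) + real (palette - card Hc)) / real palette) = rho_c"
  unfolding rho_c_def Hc_def palette_def class_size_def mark_density_def by (simp add: powr_minus powr_divide)

lemma card_Unbalanced: assumes j: "j \<in> I" shows "real (card (Unbalanced j)) \<le> x * (1 - x) ^ (k * D) * real (card Colourings)"
proof -
  have m: "real (card (Few Hm (r0 * real (k - 3)) j)) \<le> ((1/3) powr (-r0) * ((real (card Hm) * (1/3) + real (palette - card Hm)) / real palette)) ^ (k - 3) * real (card Colourings)"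
    by (rule card_Few[OF j]) (auto simp: Hm_def palette_def class_size_def)
  have a: "real (card (Few Ha (r0 * real (k - 3)) j)) \<le> ((1/3) powr (-r0) * ((real (card Ha) * (1/3) + real (palette - card Ha)) / real palette)) ^ (k - 3) * real (card Colourings)"
    by (rule card_Few[OF j]) (auto simp: Ha_def palette_def class_size_def)
  have c: "real (card (Few Hc (2 * r0 * real (k - 3)) j)) \<le> ((41/100) powr (-(2 * r0)) * ((real (card Hc) * (41/100) + real (palette - card Hc)) / real palette)) ^ (k - 3) * real (card Colourings)"
    by (rule card_Few[OF j]) (auto simp: Hc_def palette_def class_size_def)
  have cHa: "card Ha = card Hm" unfolding Ha_def Hm_def by simp
  note m = m[unfolded rho_m_eq] and a = a[unfolded cHa rho_m_eq] and c = c[unfolded rho_c_eq]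
  have "card (Unbalanced j) \<le> card (Few Hm (r0 * real (k - 3)) j) + card (Few Ha (r0 * real (k - 3)) j) + card (Few Hc (2 * r0 * real (k - 3)) j)"
    unfolding Unbalanced_def by (meson card_Un_le add_le_mono le_refl order_trans)
  hence "real (card (Unbalanced j)) \<le> real (card (Few Hm (r0 * real (k - 3)) j)) + real (card (Few Ha (r0 * real (k - 3)) j)) + real (card (Few Hc (2 * r0 * real (k - 3)) j))"
    by (metis of_nat_add of_nat_le_iff)
  also have "\<dots> \<le> (2 * rho_m ^ (k - 3) + rho_c ^ (k - 3)) * real (card Colourings)"
    using m a c by (simp add: algebra_simps)
  also have "\<dots> \<le> x * (1 - x) ^ (k * D) * real (card Colourings)"
    using lll by (intro mult_right_mono) auto
  finally show ?thesis .
qed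

lemma depends_on_Unbalanced: "depends_on Colourings (Unbalanced j) (W j)"
  unfolding depends_on_def Unbalanced_def Few_def
proof (intro ballI impI)
  fix f g assume f: "f \<in> Colourings" and g: "g \<in> Colourings" and fg: "\<forall>y\<in>W j. f y = g y"
  have e: "{y\<in>W j. f y \<in> H} = {y\<in>W j. g y \<in> H}" for H using fg by auto
  show "(f \<in> {f \<in> Colourings. real (card {y \<in> W j. f y \<in> Hm}) < r0 * real (k - 3)} \<union>
            {f \<in> Colourings. real (card {y \<in> W j. f y \<in> Ha}) < r0 * real (k - 3)} \<union>
            {f \<in> Colourings. real (card {y \<in> W j. f y \<in> Hc}) < 2 * r0 * real (k - 3)}) =
        (g \<in> {f \<in> Colourings. real (card {y \<in> W j. f y \<in> Hm}) < r0 * real (k - 3)} \<union>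
            {f \<in> Colourings. real (card {y \<in> W j. f y \<in> Ha}) < r0 * real (k - 3)} \<union>
            {f \<in> Colourings. real (card {y \<in> W j. f y \<in> Hc}) < 2 * r0 * real (k - 3)})"
    using f g by (simp add: e[of Hm] e[of Ha] e[of Hc])
qed

lemma finI: "finite I" unfolding I_def C_good_def by auto

lemma counting_lll_colourings: "counting_lll Colourings Unbalanced I Nb x (k * D)"
  unfolding Colourings_def Nb_def[abs_def]
proof (rule counting_lll_product)
  fix i assume i: "i \<in> I"
  show "Unbalanced i \<subseteq> PiE Good (\<lambda>_. {0..<palette})"
    unfolding Unbalanced_def Few_def Colourings_def by auto
  show "depends_on (PiE Good (\<lambda>_. {0..<palette})) (Unbalanced i) (W i)"
    using depends_on_Unbalanced unfolding Colourings_def .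
  show "real (card (Unbalanced i)) \<le> x * (1 - x) ^ (k * D) * real (card (PiE Good (\<lambda>_. {0..<palette})))"
    using card_Unbalanced[OF i] unfolding Colourings_def .
  have "i < length F" using i by (simp add: I_def C_good_def)
  have "card ({j. W j \<inter> W i \<noteq> {}} \<inter> I)
      \<le> card {j. j < length F \<and> var_cl (F ! j) \<inter> var_cl (F ! i) \<inter> Good \<noteq> {}}"
    by (rule card_mono) (auto simp: W_def I_def C_good_def)
  also have "\<dots> \<le> k * D"
    using Dg \<open>i < length F\<close> by (intro card_clauses_meeting_le[OF F]) (auto simp: Good_def)
  finally show "card ({j. W j \<inter> W i \<noteq> {}} \<inter> I) \<le> k * D" .
qed (use finite_Colourings[unfolded Colourings_def] finI x0 x1 in auto)

definition colour_class :: "(nat \<Rightarrow> nat) \<Rightarrow> nat set \<Rightarrow> nat set" where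
  "colour_class f H = {y\<in>Good. f y \<in> H}"

lemma marking_colour_classes:
  assumes fO: "f \<in> Colourings" and fE: "\<And>j. j \<in> I \<Longrightarrow> f \<notin> Unbalanced j"
  shows "marking k n F r0 (colour_class f Hm) (colour_class f Ha) (V_bad k n F \<union> colour_class f Hc)"
proof -
  have fr: "f y \<in> Hm \<union> Ha \<union> Hc" if "y \<in> Good" for y
    using fO that unfolding Colourings_def Hm_def Ha_def Hc_def palette_def class_size_def by auto
  have Hdisj: "Hm \<inter> Ha = {}" "Hm \<inter> Hc = {}" "Ha \<inter> Hc = {}" unfolding Hm_def Ha_def Hc_def by auto
  have GB: "Good \<inter> V_bad k n F = {}" "Good \<union> V_bad k n F = {0..<n}"
    unfolding Good_def V_good_def using V_bad_subset[OF F] by auto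
  have cnt: "var_cl (F ! j) \<inter> colour_class f H = {y\<in>W j. f y \<in> H}" for j H
    unfolding W_def colour_class_def by auto
  have "real (k - 3) = real k - 3" using k3 by simp
  then have balanced: "real (card {y\<in>W j. f y \<in> Hm}) \<ge> r0 * (real k - 3) \<and>
       real (card {y\<in>W j. f y \<in> Ha}) \<ge> r0 * (real k - 3) \<and>
       real (card {y\<in>W j. f y \<in> Hc}) \<ge> 2 * r0 * (real k - 3)" if j: "j \<in> C_good k n F" for j
    using fE[of j] fO j unfolding Unbalanced_def Few_def I_def by auto
  have Vc: "(V_bad k n F \<union> colour_class f Hc) - V_bad k n F = colour_class f Hc"
    using GB unfolding colour_class_def by auto
  have cover: "colour_class f Hm \<union> colour_class f Ha \<union> (V_bad k n F \<union> colour_class f Hc) = {0..<n}"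
    using fr GB unfolding colour_class_def by auto
  have disj: "colour_class f Hm \<inter> colour_class f Ha = {}"
    "colour_class f Hm \<inter> (V_bad k n F \<union> colour_class f Hc) = {}"
    "colour_class f Ha \<inter> (V_bad k n F \<union> colour_class f Hc) = {}"
    using Hdisj GB unfolding colour_class_def by auto
  have good: "colour_class f H \<subseteq> V_good k n F" for H
    unfolding colour_class_def Good_def by auto
  show ?thesis
    unfolding marking_def r_distributed_def Vc cnt using disj cover good balanced by auto
qed

lemma exists_marking: "\<exists>Vm Va Vc. marking k n F r0 Vm Va Vc"
proof -
  interpret L: counting_lll Colourings Unbalanced I Nb x "k * D" by (rule counting_lll_colourings)
  have "Colourings \<noteq> {}" unfolding Colourings_def by (simp add: PiE_eq_empty_iff palette_def)
  then obtain f where "f \<in> avoid Colourings Unbalanced I" using L.avoid_nonempty by blast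
  then have "f \<in> Colourings" "\<And>j. j \<in> I \<Longrightarrow> f \<notin> Unbalanced j" unfolding avoid_def by auto
  then show ?thesis using marking_colour_classes by blast
qed
end

section \<open>Marginals on the slices of a fixed bad assignment\<close>

locale marginal_estimate =
  fixes k n m :: nat and F :: cnf and Vm Va Vc V :: "nat set" and Lam :: "nat \<Rightarrow> bool"
    and v :: nat and b :: bool and D :: nat and x :: real
  assumes F: "F \<in> kcnf_formulas k n m"
    and mk: "marking k n F r0 Vm Va Vc"
    and v: "v \<in> Vm \<union> Va" and VV: "V \<subseteq> Vm \<union> Va" and vV: "v \<notin> V"
    and Dg: "\<And>y. y \<in> V_good k n F \<Longrightarrow> degree F y \<le> D"
    and x0: "0 \<le> x" and x1: "x < 1"
    and lll: "2 powr (-(2 * r0 * (real k - 3))) \<le> x * (1 - x) ^ (k * D)"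
begin

definition Y :: "nat set" where
  "Y = {0..<n} - V"
definition Bad :: "nat set" where
  "Bad = V_bad k n F"
definition R :: "nat set" where
  "R = Y - Bad"
definition ext :: "(nat \<Rightarrow> bool) \<Rightarrow> nat \<Rightarrow> bool" where
  "ext \<tau> y = (if y \<in> V then Lam y else \<tau> y)"
definition sat :: "(nat \<Rightarrow> bool) \<Rightarrow> clause \<Rightarrow> bool" where
  "sat \<tau> c = (\<exists>l\<in>set c. ext \<tau> (fst l) = snd l)"

definition Slice :: "(nat \<Rightarrow> bool) \<Rightarrow> (nat \<Rightarrow> bool) set" where
  "Slice \<sigma> = PiE Y (\<lambda>y. if y \<in> R then (UNIV :: bool set) else {\<sigma> y})"
definition W :: "nat \<Rightarrow> nat set" where
  "W j = var_cl (F ! j) \<inter> R"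
definition Viol :: "(nat \<Rightarrow> bool) \<Rightarrow> nat \<Rightarrow> (nat \<Rightarrow> bool) set" where
  "Viol \<sigma> j = {\<tau> \<in> Slice \<sigma>. \<not> sat \<tau> (F ! j)}"
definition Nb :: "nat \<Rightarrow> nat set" where
  "Nb j = {j'. W j' \<inter> W j \<noteq> {}}"
definition Nv :: "nat set" where
  "Nv = {j. v \<in> W j}"
definition Hit :: "(nat \<Rightarrow> bool) \<Rightarrow> (nat \<Rightarrow> bool) set" where
  "Hit \<sigma> = {\<tau> \<in> Slice \<sigma>. \<tau> v = b}"
definition I :: "nat set" where
  "I = C_good k n F"

lemma marking_facts:
  "Vm \<inter> Va = {}" "Vm \<inter> Vc = {}" "Va \<inter> Vc = {}" "Vm \<union> Va \<union> Vc = {0..<n}"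
  "V_bad k n F \<subseteq> Vc" "Vm \<subseteq> V_good k n F" "Va \<subseteq> V_good k n F"
  "\<And>j. j \<in> C_good k n F \<Longrightarrow> real (card (var_cl (F ! j) \<inter> (Vc - V_bad k n F))) \<ge> 2 * r0 * (real k - 3)"
  using mk unfolding marking_def r_distributed_def by auto

lemma Bad_subset: "Bad \<subseteq> {0..<n}" unfolding Bad_def using V_bad_subset[OF F] .

lemma V_good_eq: "V_good k n F = {0..<n} - Bad" unfolding V_good_def Bad_def ..

lemma Bad_Int_V: "Bad \<inter> V = {}" using VV marking_facts(6,7) V_good_eq by auto

lemma Bad_subset_Y: "Bad \<subseteq> Y" using Bad_subset Bad_Int_V unfolding Y_def by auto

lemma finite_Y[simp]: "finite Y" unfolding Y_def by auto

lemma R_subset_V_good: "R \<subseteq> V_good k n F" unfolding R_def Y_def V_good_eq by auto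

lemma v_in_R: "v \<in> R"
proof -
  have "v \<in> V_good k n F" using v marking_facts(6,7) by auto
  thus ?thesis using vV unfolding R_def Y_def V_good_eq by auto
qed

lemma Vc_minus_Bad_subset_R: "Vc - Bad \<subseteq> R"
proof -
  have "Vc \<subseteq> {0..<n}" using marking_facts(4) by auto
  moreover have "Vc \<inter> V = {}" using VV marking_facts(2,3) by auto
  ultimately show ?thesis unfolding R_def Y_def by auto
qed

lemma R_subset_Y: "R \<subseteq> Y" unfolding R_def by auto

lemma sat_iff: "sat \<tau> c \<longleftrightarrow> (\<exists>l\<in>set c. fst l \<in> V \<and> Lam (fst l) = snd l) \<or> (\<exists>l\<in>set c. fst l \<notin> V \<and> \<tau> (fst l) = snd l)"
  unfolding sat_def ext_def by (auto split: if_splits)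

lemma Omega_eq: "Omega n F V Lam = {\<tau> \<in> PiE Y (\<lambda>_. UNIV). \<forall>c\<in>set F. sat \<tau> c}"
proof -
  have "(\<forall>c'\<in>set (reduce F V Lam). \<exists>l\<in>set c'. \<tau> (fst l) = snd l) \<longleftrightarrow> (\<forall>c\<in>set F. sat \<tau> c)" for \<tau>
  proof
    assume H: "\<forall>c'\<in>set (reduce F V Lam). \<exists>l\<in>set c'. \<tau> (fst l) = snd l"
    show "\<forall>c\<in>set F. sat \<tau> c"
    proof
      fix c assume c: "c \<in> set F"
      show "sat \<tau> c"
      proof (cases "\<exists>l\<in>set c. fst l \<in> V \<and> Lam (fst l) = snd l")
        case True thus ?thesis unfolding sat_iff by blast
      next
        case False
        hence "filter (\<lambda>l. fst l \<notin> V) c \<in> set (reduce F V Lam)" unfolding reduce_def using c by auto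
        then obtain l where "l \<in> set (filter (\<lambda>l. fst l \<notin> V) c)" "\<tau> (fst l) = snd l" using H by blast
        thus ?thesis unfolding sat_iff by auto
      qed
    qed
  next
    assume H: "\<forall>c\<in>set F. sat \<tau> c"
    show "\<forall>c'\<in>set (reduce F V Lam). \<exists>l\<in>set c'. \<tau> (fst l) = snd l"
    proof
      fix c' assume "c' \<in> set (reduce F V Lam)"
      then obtain c where c: "c \<in> set F" "\<not> (\<exists>l\<in>set c. fst l \<in> V \<and> Lam (fst l) = snd l)"
        and c': "c' = filter (\<lambda>l. fst l \<notin> V) c" unfolding reduce_def by auto
      have "sat \<tau> c" using H c by auto
      then obtain l where "l \<in> set c" "fst l \<notin> V" "\<tau> (fst l) = snd l" using c(2) unfolding sat_iff by blast
      thus "\<exists>l\<in>set c'. \<tau> (fst l) = snd l" unfolding c' by (intro bexI[of _ l]) auto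
    qed
  qed
  thus ?thesis unfolding Omega_def Y_def by auto
qed

lemma finite_Slice[simp]: "finite (Slice \<sigma>)"
  unfolding Slice_def by (intro finite_PiE) auto

lemma card_Slice: "card (Slice \<sigma>) = 2 ^ card R"
  unfolding Slice_def by (rule card_PiE_partly_fixed[OF finite_Y R_subset_Y])

lemma vars_lt_n: "j < length F \<Longrightarrow> l \<in> set (F ! j) \<Longrightarrow> fst l < n"
  using kcnf_clause(2)[OF F] unfolding var_cl_def by force

lemma depends_on_Viol: assumes j: "j < length F" shows "depends_on (Slice \<sigma>) (Viol \<sigma> j) (W j)"
  unfolding depends_on_def
proof (intro ballI impI)
  fix f g assume f: "f \<in> Slice \<sigma>" and g: "g \<in> Slice \<sigma>" and fg: "\<forall>y\<in>W j. f y = g y"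
  have "ext f (fst l) = ext g (fst l)" if l: "l \<in> set (F ! j)" for l
  proof (cases "fst l \<in> V")
    case True thus ?thesis by (simp add: ext_def)
  next
    case False
    have "fst l \<in> Y" using vars_lt_n[OF j l] False unfolding Y_def by auto
    show ?thesis
    proof (cases "fst l \<in> R")
      case True
      hence "fst l \<in> W j" using l unfolding W_def var_cl_def by auto
      thus ?thesis using fg False by (simp add: ext_def)
    next
      case notR: False
      have "f (fst l) = \<sigma> (fst l)" "g (fst l) = \<sigma> (fst l)"
        using f g \<open>fst l \<in> Y\<close> notR unfolding Slice_def by (auto simp: PiE_iff)
      thus ?thesis using False by (simp add: ext_def)
    qed
  qed
  hence "sat f (F ! j) = sat g (F ! j)" unfolding sat_def by auto
  thus "f \<in> Viol \<sigma> j \<longleftrightarrow> g \<in> Viol \<sigma> j" using f g unfolding Viol_def by auto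
qed

text \<open>A violating assignment is forced on \<open>W j\<close>: each variable there takes the value falsifying its
  literal in the clause.\<close>

lemma card_Viol_le_power: "card (Viol \<sigma> j) \<le> 2 ^ card (R - W j)"
proof -
  define lit where "lit y = (SOME l. l \<in> set (F ! j) \<and> fst l = y)" for y
  have lit: "lit y \<in> set (F ! j) \<and> fst (lit y) = y" if "y \<in> W j" for y
  proof -
    from that have "\<exists>l. l \<in> set (F ! j) \<and> fst l = y" unfolding W_def var_cl_def by auto
    from someI_ex[OF this] show ?thesis unfolding lit_def .
  qed
  define h where "h y = (if y \<in> W j then \<not> snd (lit y) else \<sigma> y)" for y
  have WR: "W j \<subseteq> R" unfolding W_def by auto
  have sub: "Viol \<sigma> j \<subseteq> PiE Y (\<lambda>y. if y \<in> R - W j then (UNIV :: bool set) else {h y})"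
  proof
    fix \<tau> assume t: "\<tau> \<in> Viol \<sigma> j"
    hence tO: "\<tau> \<in> Slice \<sigma>" and ns: "\<not> sat \<tau> (F ! j)" unfolding Viol_def by auto
    have "\<tau> y = h y" if y: "y \<in> Y" "y \<notin> R - W j" for y
    proof (cases "y \<in> W j")
      case True
      have yV: "y \<notin> V" using True WR R_subset_Y unfolding Y_def by auto
      have l1: "lit y \<in> set (F ! j)" and l2: "fst (lit y) = y" using lit[OF True] by auto
      have "ext \<tau> (fst (lit y)) \<noteq> snd (lit y)" using ns l1 unfolding sat_def by blast
      hence "\<tau> y \<noteq> snd (lit y)" using yV l2 by (simp add: ext_def)
      moreover have "h y = (\<not> snd (lit y))" using True by (simp add: h_def)
      ultimately show ?thesis by simp
    next
      case False
      hence yR: "y \<notin> R" using y by auto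
      have "\<tau> y \<in> (if y \<in> R then UNIV else {\<sigma> y})" using tO y(1) unfolding Slice_def by (rule PiE_mem)
      thus ?thesis using yR False by (simp add: h_def)
    qed
    moreover have "\<tau> \<in> extensional Y" using tO unfolding Slice_def PiE_iff by blast
    ultimately show "\<tau> \<in> PiE Y (\<lambda>y. if y \<in> R - W j then (UNIV :: bool set) else {h y})"
      unfolding PiE_iff by auto
  qed
  have "card (Viol \<sigma> j) \<le> card (PiE Y (\<lambda>y. if y \<in> R - W j then (UNIV :: bool set) else {h y}))"
    using sub by (intro card_mono) (auto intro: finite_PiE)
  also have "\<dots> = 2 ^ card (R - W j)" using R_subset_Y by (intro card_PiE_partly_fixed) auto
  finally show ?thesis .
qed

lemma card_Viol:
  assumes j: "j \<in> I"
  shows "real (card (Viol \<sigma> j)) \<le> x * (1 - x) ^ (k * D) * real (card (Slice \<sigma>))"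
proof -
  have WR: "W j \<subseteq> R" unfolding W_def by auto
  have c1: "card (Viol \<sigma> j) \<le> 2 ^ card (R - W j)" by (rule card_Viol_le_power)
  have finR: "finite R" using finite_subset[OF R_subset_Y finite_Y] .
  have cW: "card (W j) \<le> card R" by (rule card_mono[OF finR WR])
  have cR: "card R = card (R - W j) + card (W j)"
    using card_Diff_subset[OF finite_subset[OF WR finR] WR] cW by simp
  have "real (card (Viol \<sigma> j)) \<le> real ((2::nat) ^ card (R - W j))" using c1 by (simp only: of_nat_le_iff)
  also have "\<dots> = 2 ^ card (R - W j)" by simp
  also have "\<dots> = 2 powr (- real (card (W j))) * real (card (Slice \<sigma>))"
  proof -
    have e1: "real (card (Slice \<sigma>)) = 2 ^ card (R - W j) * 2 ^ card (W j)"
      unfolding card_Slice cR by (simp add: power_add)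
    have e2: "2 powr (- real (card (W j))) = 1 / 2 ^ card (W j)"
      by (simp add: powr_minus powr_realpow divide_inverse)
    show ?thesis unfolding e1 e2 by simp
  qed
  also have "\<dots> \<le> 2 powr (-(2 * r0 * (real k - 3))) * real (card (Slice \<sigma>))"
  proof -
    have "real (card (var_cl (F ! j) \<inter> (Vc - V_bad k n F))) \<le> real (card (W j))"
      using Vc_minus_Bad_subset_R unfolding W_def Bad_def by (intro of_nat_mono card_mono) auto
    hence "2 * r0 * (real k - 3) \<le> real (card (W j))" using marking_facts(8)[of j] j unfolding I_def by auto
    thus ?thesis by (intro mult_right_mono) auto
  qed
  also have "\<dots> \<le> x * (1 - x) ^ (k * D) * real (card (Slice \<sigma>))"
    using lll by (intro mult_right_mono) auto
  finally show ?thesis .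
qed

lemma finI: "finite I" unfolding I_def C_good_def by auto

lemma counting_lll_slice: "counting_lll (Slice \<sigma>) (Viol \<sigma>) I Nb x (k * D)"
  unfolding Slice_def Nb_def[abs_def]
proof (rule counting_lll_product)
  fix i assume i: "i \<in> I"
  then have il: "i < length F" by (simp add: I_def C_good_def)
  show "Viol \<sigma> i \<subseteq> PiE Y (\<lambda>y. if y \<in> R then UNIV else {\<sigma> y})"
    unfolding Viol_def Slice_def by auto
  show "depends_on (PiE Y (\<lambda>y. if y \<in> R then UNIV else {\<sigma> y})) (Viol \<sigma> i) (W i)"
    using depends_on_Viol[OF il] unfolding Slice_def .
  show "real (card (Viol \<sigma> i)) \<le> x * (1 - x) ^ (k * D) * real (card (PiE Y (\<lambda>y. if y \<in> R then UNIV else {\<sigma> y})))"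
    using card_Viol[OF i] unfolding Slice_def .
  have "card ({j. W j \<inter> W i \<noteq> {}} \<inter> I)
      \<le> card {j. j < length F \<and> var_cl (F ! j) \<inter> var_cl (F ! i) \<inter> R \<noteq> {}}"
    by (rule card_mono) (auto simp: W_def I_def C_good_def)
  also have "\<dots> \<le> k * D"
    using Dg R_subset_V_good il by (intro card_clauses_meeting_le[OF F]) auto
  finally show "card ({j. W j \<inter> W i \<noteq> {}} \<inter> I) \<le> k * D" .
qed (use finite_Slice[unfolded Slice_def] finI x0 x1 in auto)

lemma Hit_eq: "Hit \<sigma> = PiE Y (\<lambda>y. if y \<in> R - {v} then (UNIV :: bool set) else {(\<sigma>(v := b)) y})"
proof (intro equalityI subsetI)
  have vY: "v \<in> Y" using v_in_R R_subset_Y by auto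
  fix \<tau> assume a: "\<tau> \<in> Hit \<sigma>"
  hence tO: "\<tau> \<in> Slice \<sigma>" and tv: "\<tau> v = b" unfolding Hit_def by auto
  have "\<tau> y \<in> (if y \<in> R - {v} then (UNIV :: bool set) else {(\<sigma>(v := b)) y})" if y: "y \<in> Y" for y
  proof (cases "y = v")
    case True thus ?thesis using tv by simp
  next
    case False
    have "\<tau> y \<in> (if y \<in> R then UNIV else {\<sigma> y})" using tO y unfolding Slice_def by (rule PiE_mem)
    thus ?thesis using False by (cases "y \<in> R") auto
  qed
  moreover have "\<tau> \<in> extensional Y" using tO unfolding Slice_def PiE_iff by blast
  ultimately show "\<tau> \<in> PiE Y (\<lambda>y. if y \<in> R - {v} then (UNIV :: bool set) else {(\<sigma>(v := b)) y})"
    unfolding PiE_iff by blast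
next
  have vY: "v \<in> Y" using v_in_R R_subset_Y by auto
  fix \<tau> assume a: "\<tau> \<in> PiE Y (\<lambda>y. if y \<in> R - {v} then (UNIV :: bool set) else {(\<sigma>(v := b)) y})"
  have mem: "\<tau> y \<in> (if y \<in> R - {v} then (UNIV :: bool set) else {(\<sigma>(v := b)) y})" if "y \<in> Y" for y
    using a that by (rule PiE_mem)
  have tv: "\<tau> v = b" using mem[OF vY] by simp
  have "\<tau> y \<in> (if y \<in> R then UNIV else {\<sigma> y})" if y: "y \<in> Y" for y
  proof (cases "y = v")
    case True thus ?thesis using v_in_R by simp
  next
    case False
    thus ?thesis using mem[OF y] by (cases "y \<in> R") auto
  qed
  moreover have "\<tau> \<in> extensional Y" using a unfolding PiE_iff by blast
  ultimately have "\<tau> \<in> Slice \<sigma>" unfolding Slice_def PiE_iff by blast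
  thus "\<tau> \<in> Hit \<sigma>" using tv unfolding Hit_def by auto
qed

lemma card_Hit: "2 * card (Hit \<sigma>) = card (Slice \<sigma>)"
proof -
  have finR: "finite R" using finite_subset[OF R_subset_Y finite_Y] .
  have "card (Hit \<sigma>) = 2 ^ card (R - {v})" unfolding Hit_eq using R_subset_Y by (intro card_PiE_partly_fixed) auto
  also have "card (R - {v}) = card R - 1" using v_in_R finR by simp
  finally have "card (Hit \<sigma>) = 2 ^ (card R - 1)" .
  moreover have "card R \<ge> 1" using v_in_R finR by (metis One_nat_def card_0_eq empty_iff less_one not_less)
  ultimately show ?thesis unfolding card_Slice by (metis Suc_diff_1 less_le_trans power_Suc zero_less_one)
qed

lemma card_Hit_Int_avoid_le:
  "real (card (Hit \<sigma> \<inter> avoid (Slice \<sigma>) (Viol \<sigma>) I)) * (1 - x) ^ D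
     \<le> 1/2 * real (card (avoid (Slice \<sigma>) (Viol \<sigma>) I))"
proof -
  interpret L: counting_lll "Slice \<sigma>" "Viol \<sigma>" I Nb x "k * D" by (rule counting_lll_slice)
  have c: "real (card (Hit \<sigma> \<inter> avoid (Slice \<sigma>) (Viol \<sigma>) I)) * (1 - x) ^ card (Nv \<inter> I) * real (card (Slice \<sigma>))
          \<le> real (card (Hit \<sigma>)) * real (card (avoid (Slice \<sigma>) (Viol \<sigma>) I))"
  proof (rule L.card_Int_avoid_conditional)
    fix S assume S: "S \<subseteq> I - Nv"
    show "real (card (Hit \<sigma> \<inter> avoid (Slice \<sigma>) (Viol \<sigma>) S)) * real (card (Slice \<sigma>)) =
       real (card (Hit \<sigma>)) * real (card (avoid (Slice \<sigma>) (Viol \<sigma>) S))"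
      unfolding Slice_def
    proof (rule card_Int_avoid_independent)
      show "finite (PiE Y (\<lambda>y. if y \<in> R then UNIV else {\<sigma> y}))" by (intro finite_PiE) auto
      show "Hit \<sigma> \<subseteq> PiE Y (\<lambda>y. if y \<in> R then UNIV else {\<sigma> y})" unfolding Hit_def Slice_def by auto
      show "depends_on (PiE Y (\<lambda>y. if y \<in> R then UNIV else {\<sigma> y})) (Hit \<sigma>) {v}"
        unfolding depends_on_def Hit_def Slice_def by auto
      show "depends_on (PiE Y (\<lambda>y. if y \<in> R then UNIV else {\<sigma> y})) (Viol \<sigma> j) (W j)"
        "{v} \<inter> W j = {}" if "j \<in> S" for j
        using that S depends_on_Viol unfolding Slice_def Nv_def I_def C_good_def by auto
    qed
  qed
  have "Nv \<inter> I \<subseteq> {j. j < length F \<and> v \<in> var_cl (F ! j)}"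
    unfolding Nv_def I_def C_good_def W_def by auto
  then have "card (Nv \<inter> I) \<le> card {j. j < length F \<and> v \<in> var_cl (F ! j)}"
    by (intro card_mono) auto
  also have "\<dots> \<le> D"
    using card_clauses_with_var[of F v] Dg[of v] v_in_R R_subset_V_good by auto
  finally have "(1 - x) ^ D \<le> (1 - x) ^ card (Nv \<inter> I)"
    using x0 x1 by (intro power_decreasing) auto
  then have "real (card (Hit \<sigma> \<inter> avoid (Slice \<sigma>) (Viol \<sigma>) I)) * (1 - x) ^ D * real (card (Slice \<sigma>))
     \<le> real (card (Hit \<sigma>)) * real (card (avoid (Slice \<sigma>) (Viol \<sigma>) I))"
    using c by (meson mult_left_mono mult_right_mono of_nat_0_le_iff order_trans)
  moreover have "real (card (Hit \<sigma>)) = real (card (Slice \<sigma>)) / 2"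
    using arg_cong[OF card_Hit[of \<sigma>], of real] by simp
  moreover have "real (card (Slice \<sigma>)) > 0" unfolding card_Slice by simp
  ultimately show ?thesis by (simp add: field_simps)
qed

lemma sat_C_bad_cong:
  assumes j: "j \<in> C_bad k n F" and agree: "\<And>y. y \<in> Bad \<Longrightarrow> \<tau> y = \<tau>' y"
  shows "sat \<tau> (F ! j) = sat \<tau>' (F ! j)"
proof -
  have "var_cl (F ! j) \<subseteq> Bad" using C_bad_var_cl(2)[OF j] unfolding Bad_def .
  then have "ext \<tau> (fst l) = ext \<tau>' (fst l)" if "l \<in> set (F ! j)" for l
    using that agree Bad_Int_V unfolding ext_def var_cl_def by auto
  then show ?thesis unfolding sat_def by auto
qed

lemma slice_eq_avoid:
  assumes t0: "\<tau>0 \<in> Omega n F V Lam" and sg: "\<sigma> = restrict \<tau>0 Bad"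
  shows "{\<tau> \<in> Omega n F V Lam. restrict \<tau> Bad = \<sigma>} = avoid (Slice \<sigma>) (Viol \<sigma>) I"
proof (intro equalityI subsetI)
  fix \<tau> assume "\<tau> \<in> {\<tau> \<in> Omega n F V Lam. restrict \<tau> Bad = \<sigma>}"
  hence t: "\<tau> \<in> PiE Y (\<lambda>_. UNIV)" "\<forall>c\<in>set F. sat \<tau> c" and r: "restrict \<tau> Bad = \<sigma>"
    unfolding Omega_eq by auto
  have "\<tau> y = \<sigma> y" if "y \<in> Bad" for y
  proof -
    have "\<sigma> y = restrict \<tau> Bad y" using r by simp
    also have "\<dots> = \<tau> y" using that by simp
    finally show ?thesis by simp
  qed
  hence "\<tau> \<in> Slice \<sigma>" using t(1) unfolding Slice_def R_def by (auto simp: PiE_iff)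
  moreover have "\<tau> \<notin> Viol \<sigma> j" if "j \<in> I" for j
  proof -
    have "j < length F" using that unfolding I_def C_good_def by auto
    hence "sat \<tau> (F ! j)" using t(2) by auto
    thus ?thesis unfolding Viol_def by auto
  qed
  ultimately show "\<tau> \<in> avoid (Slice \<sigma>) (Viol \<sigma>) I" unfolding avoid_def by auto
next
  fix \<tau> assume a: "\<tau> \<in> avoid (Slice \<sigma>) (Viol \<sigma>) I"
  hence tO: "\<tau> \<in> Slice \<sigma>" and satI: "\<And>j. j \<in> I \<Longrightarrow> sat \<tau> (F ! j)"
    unfolding avoid_def Viol_def by auto
  have tB: "\<tau> y = \<tau>0 y" if y: "y \<in> Bad" for y
  proof -
    have "y \<in> Y" "y \<notin> R" using y Bad_subset_Y unfolding R_def by auto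
    have "\<tau> y \<in> (if y \<in> R then UNIV else {\<sigma> y})" using tO \<open>y \<in> Y\<close> unfolding Slice_def by (rule PiE_mem)
    hence "\<tau> y = \<sigma> y" using \<open>y \<notin> R\<close> by simp
    also have "\<sigma> y = \<tau>0 y" using sg y by simp
    finally show ?thesis .
  qed
  have t0s: "\<forall>c\<in>set F. sat \<tau>0 c" using t0 unfolding Omega_eq by auto
  have "sat \<tau> c" if c: "c \<in> set F" for c
  proof -
    obtain j where j: "j < length F" "c = F ! j" using c by (auto simp: in_set_conv_nth)
    show ?thesis
    proof (cases "j \<in> I")
      case True thus ?thesis using satI j by auto
    next
      case False
      then have "j \<in> C_bad k n F" using j unfolding I_def C_good_def by auto
      then show ?thesis using sat_C_bad_cong[of j \<tau> \<tau>0] tB t0s c j by auto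
    qed
  qed
  moreover have "\<tau> \<in> PiE Y (\<lambda>_. UNIV)" using tO unfolding Slice_def by (auto simp: PiE_iff)
  moreover have "restrict \<tau> Bad = \<sigma>" unfolding sg by (rule ext) (simp add: tB)
  ultimately show "\<tau> \<in> {\<tau> \<in> Omega n F V Lam. restrict \<tau> Bad = \<sigma>}" unfolding Omega_eq by auto
qed

lemma finite_Omega: "finite (Omega n F V Lam)"
proof -
  have "finite (PiE Y (\<lambda>_. (UNIV :: bool set)))" by (intro finite_PiE) auto
  thus ?thesis unfolding Omega_eq by auto
qed

lemma card_fixed_v_le:
  "real (card {\<tau> \<in> Omega n F V Lam. \<tau> v = b}) * (1 - x) ^ D \<le> 1/2 * real (card (Omega n F V Lam))"
proof -
  define Om where "Om = Omega n F V Lam"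
  define Ob where "Ob = {\<tau> \<in> Om. \<tau> v = b}"
  define g where "g \<tau> = restrict \<tau> Bad" for \<tau> :: "nat \<Rightarrow> bool"
  define T where "T = g ` Om"
  have finO: "finite Om" using finite_Omega unfolding Om_def .
  have finOb: "finite Ob" using finO unfolding Ob_def by auto
  have finT: "finite T" using finO unfolding T_def by auto
  have gOb: "g ` Ob \<subseteq> T" unfolding T_def Ob_def by auto
  have gO: "g ` Om \<subseteq> T" unfolding T_def by auto
  have s1: "card Ob = (\<Sum>\<sigma>\<in>T. card {\<tau> \<in> Ob. g \<tau> = \<sigma>})"
    using sum.group[OF finOb finT gOb, of "\<lambda>_. (1::nat)"] by simp
  have s2: "card Om = (\<Sum>\<sigma>\<in>T. card {\<tau> \<in> Om. g \<tau> = \<sigma>})"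
    using sum.group[OF finO finT gO, of "\<lambda>_. (1::nat)"] by simp
  have each: "real (card {\<tau> \<in> Ob. g \<tau> = \<sigma>}) * (1 - x) ^ D \<le> 1/2 * real (card {\<tau> \<in> Om. g \<tau> = \<sigma>})"
    if s: "\<sigma> \<in> T" for \<sigma>
  proof -
    obtain \<tau>0 where t0: "\<tau>0 \<in> Om" and sg: "\<sigma> = restrict \<tau>0 Bad" using s unfolding T_def g_def by auto
    have e1: "{\<tau> \<in> Om. g \<tau> = \<sigma>} = avoid (Slice \<sigma>) (Viol \<sigma>) I"
      using slice_eq_avoid[OF t0[unfolded Om_def] sg] unfolding Om_def g_def .
    have e2: "{\<tau> \<in> Ob. g \<tau> = \<sigma>} = Hit \<sigma> \<inter> avoid (Slice \<sigma>) (Viol \<sigma>) I"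
    proof -
      have "{\<tau> \<in> Ob. g \<tau> = \<sigma>} = {\<tau> \<in> {\<tau> \<in> Om. g \<tau> = \<sigma>}. \<tau> v = b}" unfolding Ob_def by auto
      also have "\<dots> = Hit \<sigma> \<inter> avoid (Slice \<sigma>) (Viol \<sigma>) I" unfolding e1 Hit_def avoid_def by auto
      finally show ?thesis .
    qed
    show ?thesis unfolding e1 e2 by (rule card_Hit_Int_avoid_le)
  qed
  have "real (card Ob) * (1 - x) ^ D = (\<Sum>\<sigma>\<in>T. real (card {\<tau> \<in> Ob. g \<tau> = \<sigma>}) * (1 - x) ^ D)"
    unfolding s1 by (simp add: sum_distrib_right)
  also have "\<dots> \<le> (\<Sum>\<sigma>\<in>T. 1/2 * real (card {\<tau> \<in> Om. g \<tau> = \<sigma>}))"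
    by (intro sum_mono each)
  also have "\<dots> = 1/2 * real (card Om)" unfolding s2 by (simp add: sum_distrib_left)
  finally show ?thesis unfolding Ob_def Om_def .
qed

lemma prob_bound: "prob_val n F V Lam v b * (1 - x) ^ D \<le> 1/2"
proof (cases "card (Omega n F V Lam) = 0")
  case True thus ?thesis unfolding prob_val_def by simp
next
  case False
  hence pos: "real (card (Omega n F V Lam)) > 0" by simp
  have "prob_val n F V Lam v b * (1 - x) ^ D
      = real (card {\<tau> \<in> Omega n F V Lam. \<tau> v = b}) * (1 - x) ^ D / real (card (Omega n F V Lam))"
    unfolding prob_val_def by simp
  also have "\<dots> \<le> 1/2 * real (card (Omega n F V Lam)) / real (card (Omega n F V Lam))"
    using card_fixed_v_le pos by (intro divide_right_mono) auto
  also have "\<dots> = 1/2" using pos by simp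
  finally show ?thesis .
qed
end

section \<open>Choice of the local-lemma parameters for large k\<close>

definition Delta_real :: "nat \<Rightarrow> real" where
  "Delta_real k = 2 powr ((r0 - 2 * delta) * real k)"
definition Dmax :: "nat \<Rightarrow> nat" where
  "Dmax k = nat (Delta k) - 1"

definition x_marg :: "nat \<Rightarrow> real" where
  "x_marg k = 2 * 2 powr (-(2 * r0 * (real k - 3)))"
definition x_mark :: "nat \<Rightarrow> real" where
  "x_mark k = 2 * (2 * rho_m ^ (k - 3) + rho_c ^ (k - 3))"
definition theta :: "nat \<Rightarrow> real" where
  "theta k = 1 / (real k * 2 powr ((r0 + delta) * real k))"

lemma V_good_degree_le_Dmax: "y \<in> V_good k n F \<Longrightarrow> degree F y \<le> Dmax k"
  using V_good_degree_le unfolding Dmax_def .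

lemma Dmax_le: "real (Dmax k) \<le> Delta_real k"
  using Delta_bounds[of k] unfolding Dmax_def Delta_real_def by linarith

lemma k_Dmax_mult_le:
  assumes "0 \<le> x" "real k * Delta_real k * x \<le> 1/2"
  shows "real (k * Dmax k) * x \<le> 1/2"
proof -
  have "real (k * Dmax k) * x = real k * (real (Dmax k) * x)" by simp
  also have "\<dots> \<le> real k * (Delta_real k * x)"
    using Dmax_le assms(1) by (intro mult_left_mono mult_right_mono) auto
  finally show ?thesis using assms(2) by (simp add: mult.assoc)
qed

lemma Delta_real_ge_1: "Delta_real k \<ge> 1"
  unfolding Delta_real_def r0_def delta_def by (intro ge_one_powr_ge_zero) auto

lemma lll_weight_le:
  fixes p x :: real and N :: nat
  assumes p: "0 \<le> p" and x: "x = 2 * p" and Nx: "real N * x \<le> 1/2"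
  shows "p \<le> x * (1 - x) ^ N"
proof (cases "N = 0")
  case True thus ?thesis using x p by simp
next
  case False
  hence "real N \<ge> 1" by simp
  hence "1 * x \<le> real N * x" using x p by (intro mult_right_mono) auto
  hence x12: "x \<le> 1/2" using Nx by simp
  have "1 + real N * (- x) \<le> (1 + (- x)) ^ N" using x12 by (intro Bernoulli_inequality) auto
  hence "1/2 \<le> (1 - x) ^ N" using Nx by simp
  hence "x * (1/2) \<le> x * (1 - x) ^ N" using x p by (intro mult_left_mono) auto
  thus ?thesis using x by simp
qed

lemma one_le_power_mult_exp:
  fixes x th :: real and D :: nat
  assumes x: "0 \<le> x" and h1: "real D * x \<le> 1/2" and h2: "2 * real D * x \<le> th"
  shows "1 \<le> (1 - x) ^ D * exp th"
proof -
  define y where "y = real D * x"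
  have y0: "0 \<le> y" "y \<le> 1/2" using x h1 unfolding y_def by auto
  have b: "1 - y \<le> (1 - x) ^ D"
  proof (cases "D = 0")
    case True thus ?thesis unfolding y_def by simp
  next
    case False
    have "1 \<le> real D" using False by simp
    hence "1 * x \<le> real D * x" using x by (intro mult_right_mono) auto
    hence "x \<le> 1" using h1 by simp
    hence "1 + real D * (- x) \<le> (1 + (- x)) ^ D" by (intro Bernoulli_inequality) auto
    thus ?thesis unfolding y_def by simp
  qed
  have "exp th \<ge> exp (2 * y)" using h2 unfolding y_def by simp
  moreover have "exp (2 * y) \<ge> 1 + 2 * y" by (rule exp_ge_add_one_self)
  ultimately have e: "exp th \<ge> 1 + 2 * y" by linarith
  have "0 \<le> y * (1 - 2 * y)" using y0 by simp
  hence "1 \<le> (1 - y) * (1 + 2 * y)" by (simp add: algebra_simps)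
  also have "\<dots> \<le> (1 - x) ^ D * exp th"
    using b e y0 by (intro mult_mono) auto
  finally show ?thesis .
qed


lemma eventually_marginal_weight: "eventually (\<lambda>k. 2 * real k * Delta_real k * x_marg k \<le> theta k) sequentially"
  unfolding Delta_real_def x_marg_def theta_def r0_def delta_def by real_asymp

lemma theta_le_1: "k \<ge> 1 \<Longrightarrow> theta k \<le> 1"
proof -
  assume k: "k \<ge> 1"
  have "2 powr ((r0 + delta) * real k) \<ge> 1" unfolding r0_def delta_def by (intro ge_one_powr_ge_zero) auto
  moreover have "real k \<ge> 1" using k by simp
  ultimately have "1 * 1 \<le> real k * 2 powr ((r0 + delta) * real k)"
    by (intro mult_mono) auto
  thus ?thesis unfolding theta_def by simp
qed

lemma marginal_numerics: "eventually (\<lambda>k. 0 \<le> x_marg k \<and> x_marg k < 1 \<and>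
    2 powr (-(2 * r0 * (real k - 3))) \<le> x_marg k * (1 - x_marg k) ^ (k * Dmax k) \<and>
    1 \<le> (1 - x_marg k) ^ Dmax k * exp (theta k)) sequentially"
  using eventually_marginal_weight eventually_ge_at_top[of 1]
proof eventually_elim
  case (elim k)
  have x0: "0 \<le> x_marg k" unfolding x_marg_def by simp
  have P1: "Delta_real k \<ge> 1" by (rule Delta_real_ge_1)
  have th1: "theta k \<le> 1" using theta_le_1 elim(2) .
  have k1: "real k \<ge> 1" using elim(2) by simp
  have kP: "1 * 1 \<le> real k * Delta_real k" using P1 k1 by (intro mult_mono) auto
  have kPx: "real k * Delta_real k * x_marg k \<le> 1/2" using elim(1) th1 by simp
  have xle: "1 * x_marg k \<le> real k * Delta_real k * x_marg k" using kP x0 by (intro mult_right_mono) auto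
  have DxkP: "real (Dmax k) * x_marg k \<le> Delta_real k * x_marg k" using Dmax_le x0 by (intro mult_right_mono) auto
  have "1 * (Delta_real k * x_marg k) \<le> real k * (Delta_real k * x_marg k)" using k1 P1 x0 by (intro mult_right_mono) auto
  hence Pkx: "Delta_real k * x_marg k \<le> real k * Delta_real k * x_marg k" by (simp add: mult.assoc)
  have a: "real (k * Dmax k) * x_marg k \<le> 1/2" using x0 kPx by (rule k_Dmax_mult_le)
  have "2 powr (-(2 * r0 * (real k - 3))) \<le> x_marg k * (1 - x_marg k) ^ (k * Dmax k)"
    by (rule lll_weight_le[OF _ _ a]) (auto simp: x_marg_def)
  moreover have "1 \<le> (1 - x_marg k) ^ Dmax k * exp (theta k)"
    by (rule one_le_power_mult_exp[OF x0]) (use DxkP Pkx kPx elim(1) in auto)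
  ultimately show ?case using x0 xle kPx by auto
qed

lemma eventually_rho_power_small:
  fixes rho eps :: real
  assumes rho0: "0 < rho" and r1: "rho * 2 powr (r0 - 2 * delta) < 1" and e: "eps > 0"
  shows "eventually (\<lambda>k. real k * Delta_real k * rho ^ (k - 3) \<le> eps) sequentially"
proof -
  define lam where "lam = rho * 2 powr (r0 - 2 * delta)"
  have l0: "0 < lam" "lam < 1" using rho0 r1 unfolding lam_def by auto
  have "(\<lambda>k. of_nat k * lam ^ k) \<longlonglongrightarrow> 0" using l0 by (intro powser_times_n_limit_0) auto
  moreover have "eps * rho ^ 3 > 0" using e rho0 by simp
  ultimately have ev: "eventually (\<lambda>k. real k * lam ^ k < eps * rho ^ 3) sequentially"
    by (rule order_tendstoD(2))
  show ?thesis using ev eventually_ge_at_top[of 3]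
  proof eventually_elim
    case (elim k)
    have Delta_real: "Delta_real k = (2 powr (r0 - 2 * delta)) ^ k"
      unfolding Delta_real_def by (simp add: powr_realpow[symmetric] powr_powr mult.commute)
    have rk: "rho ^ k = rho ^ (k - 3) * rho ^ 3" using elim(2) by (simp add: power_add[symmetric])
    have "real k * Delta_real k * rho ^ (k - 3) * rho ^ 3 = real k * lam ^ k"
      unfolding Delta_real lam_def rk power_mult_distrib by (simp add: mult_ac)
    hence "real k * Delta_real k * rho ^ (k - 3) * rho ^ 3 < eps * rho ^ 3" using elim(1) by (simp only:)
    thus ?case using rho0 by simp
  qed
qed

lemma rho_pos: "rho_m > 0" "rho_c > 0"
  unfolding rho_m_def rho_c_def mark_density_def by auto

lemma marking_numerics: "eventually (\<lambda>k. 0 \<le> x_mark k \<and> x_mark k < 1 \<and>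
    2 * rho_m ^ (k - 3) + rho_c ^ (k - 3) \<le> x_mark k * (1 - x_mark k) ^ (k * Dmax k)) sequentially"
proof -
  have e32: "(1/32::real) > 0" by simp
  show ?thesis
    using eventually_rho_power_small[OF rho_pos(1) rho_m_bound e32]
      eventually_rho_power_small[OF rho_pos(2) rho_c_bound e32] eventually_ge_at_top[of 1]
  proof eventually_elim
    case (elim k)
    define p where "p = 2 * rho_m ^ (k - 3) + rho_c ^ (k - 3)"
    have p0: "0 \<le> p" unfolding p_def using rho_pos by simp
    have x: "x_mark k = 2 * p" unfolding x_mark_def p_def ..
    have P1: "Delta_real k \<ge> 1" by (rule Delta_real_ge_1)
    have k1: "real k \<ge> 1" using elim(3) by simp
    have kP: "1 * 1 \<le> real k * Delta_real k" using P1 k1 by (intro mult_mono) auto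
    have kPx: "real k * Delta_real k * x_mark k \<le> 1/2"
    proof -
      have "real k * Delta_real k * x_mark k = 4 * (real k * Delta_real k * rho_m ^ (k - 3)) + 2 * (real k * Delta_real k * rho_c ^ (k - 3))"
        unfolding x_mark_def by (simp add: algebra_simps)
      thus ?thesis using elim(1,2) by simp
    qed
    have x0: "0 \<le> x_mark k" using x p0 by simp
    have xle: "1 * x_mark k \<le> real k * Delta_real k * x_mark k" using kP x0 by (intro mult_right_mono) auto
    have a: "real (k * Dmax k) * x_mark k \<le> 1/2" using x0 kPx by (rule k_Dmax_mult_le)
    have "p \<le> x_mark k * (1 - x_mark k) ^ (k * Dmax k)" by (rule lll_weight_le[OF p0 x a])
    thus ?case using x0 xle kPx unfolding p_def by auto
  qed
qed

section \<open>Clauses with repeated variables are rare\<close>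

lemma card_lists_meeting_Suc:
  fixes A B :: "'a set"
  assumes A: "finite A" and B: "B \<subseteq> A"
  shows "card {xs. set xs \<subseteq> A \<and> length xs = Suc m \<and> (\<exists>x\<in>set xs. x \<in> B)}
     \<le> card A ^ m * card B + card {xs. set xs \<subseteq> A \<and> length xs = m \<and> (\<exists>x\<in>set xs. x \<in> B)} * card A"
proof -
  define G where "G m = {xs. set xs \<subseteq> A \<and> length xs = m \<and> (\<exists>x\<in>set xs. x \<in> B)}" for m
  define Lm where "Lm = {xs. set xs \<subseteq> A \<and> length xs = m}"
  have finL: "finite Lm" unfolding Lm_def using A by (rule finite_lists_length_eq)
  have finG: "finite (G m)" unfolding G_def by (rule finite_subset[OF _ finL]) (auto simp: Lm_def)
  have finB: "finite B" using A B finite_subset by auto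
  have sub: "G (Suc m) \<subseteq> (\<lambda>(xs, x). x # xs) ` (Lm \<times> B) \<union> (\<lambda>(xs, x). x # xs) ` (G m \<times> A)"
  proof
    fix ys assume "ys \<in> G (Suc m)"
    then obtain x xs where ys: "ys = x # xs" and x: "x \<in> A" and xs: "set xs \<subseteq> A" "length xs = m"
      and b: "x \<in> B \<or> (\<exists>z\<in>set xs. z \<in> B)"
      unfolding G_def by (cases ys) auto
    show "ys \<in> (\<lambda>(xs, x). x # xs) ` (Lm \<times> B) \<union> (\<lambda>(xs, x). x # xs) ` (G m \<times> A)"
    proof (cases "x \<in> B")
      case True
      hence "(xs, x) \<in> Lm \<times> B" using xs unfolding Lm_def by auto
      thus ?thesis unfolding ys by force
    next
      case False
      hence "(xs, x) \<in> G m \<times> A" using xs x b unfolding G_def by auto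
      thus ?thesis unfolding ys by force
    qed
  qed
  have "card (G (Suc m)) \<le> card ((\<lambda>(xs, x). x # xs) ` (Lm \<times> B) \<union> (\<lambda>(xs, x). x # xs) ` (G m \<times> A))"
    using sub finL finG finB A by (intro card_mono) auto
  also have "\<dots> \<le> card ((\<lambda>(xs, x). x # xs) ` (Lm \<times> B)) + card ((\<lambda>(xs, x). x # xs) ` (G m \<times> A))"
    by (rule card_Un_le)
  also have "\<dots> \<le> card (Lm \<times> B) + card (G m \<times> A)"
    by (intro add_mono card_image_le) (use finL finG finB A in auto)
  also have "\<dots> = card A ^ m * card B + card (G m) * card A"
    using A unfolding Lm_def by (simp add: card_cartesian_product card_lists_length_eq)
  finally show ?thesis unfolding G_def .
qed

lemma card_lists_meeting:
  fixes A B :: "'a set"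
  assumes A: "finite A" and B: "B \<subseteq> A"
  shows "card {xs. set xs \<subseteq> A \<and> length xs = m \<and> (\<exists>x\<in>set xs. x \<in> B)} * card A \<le> m * card B * card A ^ m"
proof (induction m)
  case 0 thus ?case by simp
next
  case (Suc m)
  let ?G = "\<lambda>m. card {xs. set xs \<subseteq> A \<and> length xs = m \<and> (\<exists>x\<in>set xs. x \<in> B)}"
  have "?G (Suc m) * card A \<le> (card A ^ m * card B + ?G m * card A) * card A"
    using card_lists_meeting_Suc[OF A B, of m] by (rule mult_right_mono) simp
  also have "\<dots> \<le> card A ^ m * card B * card A + (m * card B * card A ^ m) * card A"
    using Suc.IH by (simp add: algebra_simps)
  also have "\<dots> = Suc m * card B * card A ^ Suc m" by (simp add: algebra_simps)
  finally show ?case .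
qed

definition literals :: "nat \<Rightarrow> lit set" where
  "literals n = {0..<n} \<times> (UNIV :: bool set)"
definition deficient :: "nat \<Rightarrow> nat \<Rightarrow> nat \<Rightarrow> clause set" where
  "deficient n d L = {c. set c \<subseteq> literals n \<and> length c = L \<and> card (var_cl c) + d \<le> L}"

lemma finite_literals: "finite (literals n)" unfolding literals_def by (intro finite_cartesian_product) auto
lemma card_literals: "card (literals n) = 2 * n" unfolding literals_def by (simp add: card_cartesian_product)

lemma finite_deficient: "finite (deficient n d L)"
  unfolding deficient_def by (rule finite_subset[OF _ finite_lists_length_eq[OF finite_literals, of n L]]) auto

lemma card_deficient_0: "card (deficient n 0 L) \<le> card (literals n) ^ L"
proof -
  have "card (deficient n 0 L) \<le> card {c. set c \<subseteq> literals n \<and> length c = L}"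
    using finite_lists_length_eq[OF finite_literals, of n L] unfolding deficient_def by (intro card_mono) auto
  thus ?thesis by (simp add: card_lists_length_eq finite_literals)
qed

lemma card_deficient_Suc: "card (deficient n (Suc d) (Suc L)) \<le> card (deficient n (Suc d) L) * card (literals n) + 2 * L * card (deficient n d L)"
proof -
  let ?f = "\<lambda>(xs, x). x # xs"
  let ?S = "SIGMA xs:deficient n d L. var_cl xs \<times> (UNIV :: bool set)"
  have sub: "deficient n (Suc d) (Suc L) \<subseteq> ?f ` (deficient n (Suc d) L \<times> literals n) \<union> ?f ` ?S"
  proof
    fix ys assume "ys \<in> deficient n (Suc d) (Suc L)"
    then obtain x xs where ys: "ys = x # xs" and x: "x \<in> literals n" and xs: "set xs \<subseteq> literals n" "length xs = L"
      and c: "card (var_cl (x # xs)) + Suc d \<le> Suc L"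
      unfolding deficient_def by (cases ys) auto
    have vc: "var_cl (x # xs) = insert (fst x) (var_cl xs)" unfolding var_cl_def by auto
    show "ys \<in> ?f ` (deficient n (Suc d) L \<times> literals n) \<union> ?f ` ?S"
    proof (cases "fst x \<in> var_cl xs")
      case True
      hence "card (var_cl (x # xs)) = card (var_cl xs)" unfolding vc by (simp add: insert_absorb)
      hence "xs \<in> deficient n d L" using c xs unfolding deficient_def by auto
      hence "(xs, x) \<in> ?S" using True by (cases x) auto
      thus ?thesis unfolding ys by force
    next
      case False
      hence "card (var_cl (x # xs)) = Suc (card (var_cl xs))" unfolding vc by simp
      hence "xs \<in> deficient n (Suc d) L" using c xs unfolding deficient_def by auto
      hence "(xs, x) \<in> deficient n (Suc d) L \<times> literals n" using x by auto
      thus ?thesis unfolding ys by force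
    qed
  qed
  have finS: "finite ?S" using finite_deficient by (intro finite_SigmaI) auto
  have "card (deficient n (Suc d) (Suc L)) \<le> card (?f ` (deficient n (Suc d) L \<times> literals n) \<union> ?f ` ?S)"
    using sub by (intro card_mono finite_UnI finite_imageI finite_cartesian_product finite_deficient finite_literals finS)
  also have "\<dots> \<le> card (?f ` (deficient n (Suc d) L \<times> literals n)) + card (?f ` ?S)" by (rule card_Un_le)
  also have "\<dots> \<le> card (deficient n (Suc d) L \<times> literals n) + card ?S"
    by (intro add_mono card_image_le finite_cartesian_product finite_deficient finite_literals finS)
  also have "card (deficient n (Suc d) L \<times> literals n) = card (deficient n (Suc d) L) * card (literals n)" by (rule card_cartesian_product)
  also have "card ?S = (\<Sum>xs\<in>deficient n d L. card (var_cl xs \<times> (UNIV :: bool set)))"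
    using finite_deficient by (intro card_SigmaI) auto
  also have "\<dots> \<le> (\<Sum>xs\<in>deficient n d L. 2 * L)"
  proof (intro sum_mono)
    fix xs assume "xs \<in> deficient n d L"
    hence "length xs = L" unfolding deficient_def by auto
    hence "card (var_cl xs) \<le> L" using card_var_cl_le[of xs] by simp
    thus "card (var_cl xs \<times> (UNIV :: bool set)) \<le> 2 * L" by (simp add: card_cartesian_product)
  qed
  also have "\<dots> = 2 * L * card (deficient n d L)" by simp
  finally show ?thesis by simp
qed

lemma card_deficient_1: "card (deficient n 1 L) * card (literals n) \<le> 2 * L^2 * card (literals n) ^ L"
proof (induction L)
  case 0
  have "deficient n 1 0 = {}" unfolding deficient_def by auto
  thus ?case by simp
next
  case (Suc L)
  let ?M = "card (literals n)"
  have "card (deficient n 1 (Suc L)) \<le> card (deficient n 1 L) * ?M + 2 * L * card (deficient n 0 L)"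
    using card_deficient_Suc[of n 0 L] by simp
  also have "\<dots> \<le> card (deficient n 1 L) * ?M + 2 * L * ?M ^ L"
    using card_deficient_0[of n L] by (intro add_left_mono mult_left_mono) auto
  finally have c: "card (deficient n 1 (Suc L)) \<le> card (deficient n 1 L) * ?M + 2 * L * ?M ^ L" .
  have "card (deficient n 1 (Suc L)) * ?M \<le> (card (deficient n 1 L) * ?M + 2 * L * ?M ^ L) * ?M"
    using c by (rule mult_right_mono) simp
  also have "\<dots> = (card (deficient n 1 L) * ?M) * ?M + 2 * L * ?M ^ Suc L" by (simp add: algebra_simps)
  also have "\<dots> \<le> (2 * L^2 * ?M ^ L) * ?M + 2 * L * ?M ^ Suc L"
    using Suc.IH by (intro add_right_mono mult_right_mono) auto
  also have "\<dots> = (2 * L^2 + 2 * L) * ?M ^ Suc L" by (simp add: algebra_simps)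
  also have "\<dots> \<le> 2 * (Suc L)^2 * ?M ^ Suc L"
    by (intro mult_right_mono) (auto simp: power2_eq_square)
  finally show ?case .
qed

lemma card_deficient_2: "card (deficient n 2 L) * card (literals n) ^ 2 \<le> 4 * L^4 * card (literals n) ^ L"
proof (induction L)
  case 0
  have "deficient n 2 0 = {}" unfolding deficient_def by auto
  thus ?case by simp
next
  case (Suc L)
  let ?M = "card (literals n)"
  have c: "card (deficient n 2 (Suc L)) \<le> card (deficient n 2 L) * ?M + 2 * L * card (deficient n 1 L)"
    using card_deficient_Suc[of n 1 L] by (simp add: numeral_2_eq_2)
  have "card (deficient n 2 (Suc L)) * ?M ^ 2 \<le> (card (deficient n 2 L) * ?M + 2 * L * card (deficient n 1 L)) * ?M ^ 2"
    using c by (rule mult_right_mono) simp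
  also have "\<dots> = (card (deficient n 2 L) * ?M ^ 2) * ?M + 2 * L * ?M * (card (deficient n 1 L) * ?M)"
    by (simp add: algebra_simps power2_eq_square)
  also have "\<dots> \<le> (4 * L^4 * ?M ^ L) * ?M + 2 * L * ?M * (2 * L^2 * ?M ^ L)"
    using Suc.IH card_deficient_1[of n L] by (intro add_mono mult_right_mono mult_left_mono) auto
  also have "\<dots> = (4 * L^4 + 4 * L^3) * ?M ^ Suc L" by (simp add: algebra_simps power_numeral_reduce eval_nat_numeral)
  also have "\<dots> \<le> 4 * (Suc L)^4 * ?M ^ Suc L"
  proof (intro mult_right_mono)
    have "L^4 + L^3 \<le> (Suc L)^4" by (simp add: eval_nat_numeral algebra_simps)
    thus "4 * L^4 + 4 * L^3 \<le> 4 * (Suc L)^4" by simp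
  qed simp
  finally show ?case .
qed


definition kclauses :: "nat \<Rightarrow> nat \<Rightarrow> clause set" where
  "kclauses k n = {c. set c \<subseteq> literals n \<and> length c = k}"

lemma kcnf_formulas_eq: "kcnf_formulas k n m = {F. set F \<subseteq> kclauses k n \<and> length F = m}"
proof -
  have e: "set c \<subseteq> {0..<n} \<times> (UNIV :: bool set) \<longleftrightarrow> (\<forall>l\<in>set c. fst l < n)" for c :: clause
    by (force simp: mem_Times_iff)
  show ?thesis unfolding kcnf_formulas_def kclauses_def literals_def e by blast
qed

lemma finite_kclauses: "finite (kclauses k n)" unfolding kclauses_def by (rule finite_lists_length_eq[OF finite_literals])

lemma card_kclauses: "card (kclauses k n) = (2 * n) ^ k"
  unfolding kclauses_def by (simp add: card_lists_length_eq finite_literals card_literals)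

lemma finite_kcnf_formulas: "finite (kcnf_formulas k n m)"
  unfolding kcnf_formulas_eq by (rule finite_lists_length_eq[OF finite_kclauses])

lemma card_kcnf_formulas: "card (kcnf_formulas k n m) = ((2 * n) ^ k) ^ m"
  unfolding kcnf_formulas_eq by (simp add: card_lists_length_eq finite_kclauses card_kclauses)

lemma card_deficient_kclauses:
  "card {c \<in> kclauses k n. card (var_cl c) < k - 1} * (2 * n) ^ 2 \<le> 4 * k ^ 4 * (2 * n) ^ k"
proof -
  have "{c \<in> kclauses k n. card (var_cl c) < k - 1} \<subseteq> deficient n 2 k" unfolding kclauses_def deficient_def by auto
  hence "card {c \<in> kclauses k n. card (var_cl c) < k - 1} \<le> card (deficient n 2 k)" by (intro card_mono finite_deficient)
  hence "card {c \<in> kclauses k n. card (var_cl c) < k - 1} * (2 * n) ^ 2 \<le> card (deficient n 2 k) * (2 * n) ^ 2"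
    by (rule mult_right_mono) simp
  also have "\<dots> \<le> 4 * k ^ 4 * (2 * n) ^ k" using card_deficient_2[of n k] by (simp add: card_literals)
  finally show ?thesis .
qed

lemma card_kcnf_deficient_le:
  "card {F \<in> kcnf_formulas k n m. \<exists>c\<in>set F. card (var_cl c) < k - 1} * n ^ 2
     \<le> m * k ^ 4 * card (kcnf_formulas k n m)"
proof (cases "n = 0")
  case False
  define C where "C = kclauses k n"
  define Bc where "Bc = {c \<in> C. card (var_cl c) < k - 1}"
  let ?B = "{F \<in> kcnf_formulas k n m. \<exists>c\<in>set F. card (var_cl c) < k - 1}"
  have eq: "?B = {F. set F \<subseteq> C \<and> length F = m \<and> (\<exists>c\<in>set F. c \<in> Bc)}"
    unfolding kcnf_formulas_eq Bc_def C_def by auto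
  have cs: "card ?B * card C \<le> m * card Bc * card C ^ m"
    unfolding eq by (rule card_lists_meeting[OF finite_kclauses[of k n, folded C_def]]) (auto simp: Bc_def)
  have bc: "card Bc * (2 * n) ^ 2 \<le> 4 * k ^ 4 * card C"
    unfolding Bc_def C_def card_kclauses by (rule card_deficient_kclauses)
  have "card ?B * n ^ 2 * (4 * card C) = (card ?B * card C) * (2 * n) ^ 2"
    by (simp add: power_mult_distrib)
  also have "\<dots> \<le> m * card C ^ m * (card Bc * (2 * n) ^ 2)"
    using mult_right_mono[OF cs, of "(2 * n) ^ 2"] by (simp add: mult_ac)
  also have "\<dots> \<le> (m * k ^ 4 * card C ^ m) * (4 * card C)"
    using mult_left_mono[OF bc, of "m * card C ^ m"] by (simp add: mult_ac)
  finally show ?thesis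
    using False by (simp add: C_def card_kclauses card_kcnf_formulas power_mult)
qed simp

lemma prob_distinct_vars_ge:
  assumes n: "n \<ge> 1"
  shows "1 - real m * real k ^ 4 / real n ^ 2
     \<le> prob_kcnf k n m (\<lambda>F. \<forall>j<length F. k - 1 \<le> card (var_cl (F ! j)))"
proof -
  let ?K = "kcnf_formulas k n m"
  let ?B = "{F \<in> ?K. \<exists>c\<in>set F. card (var_cl c) < k - 1}"
  have K0: "real (card ?K) > 0" using n by (simp add: card_kcnf_formulas)
  have "(\<forall>j<length F. k - 1 \<le> card (var_cl (F ! j))) \<longleftrightarrow> \<not> (\<exists>c\<in>set F. card (var_cl c) < k - 1)"
    for F :: cnf
    by (auto simp: all_set_conv_all_nth not_less)
  then have "{F \<in> ?K. \<forall>j<length F. k - 1 \<le> card (var_cl (F ! j))} = ?K - ?B" by auto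
  moreover have "card (?K - ?B) = card ?K - card ?B"
    by (rule card_Diff_subset) (auto intro: finite_subset[OF _ finite_kcnf_formulas])
  moreover have "card ?B \<le> card ?K" by (intro card_mono finite_kcnf_formulas) auto
  ultimately have "prob_kcnf k n m (\<lambda>F. \<forall>j<length F. k - 1 \<le> card (var_cl (F ! j)))
      = (real (card ?K) - real (card ?B)) / real (card ?K)"
    unfolding prob_kcnf_def by (simp add: of_nat_diff)
  also have "\<dots> = 1 - real (card ?B) / real (card ?K)"
    using K0 by (simp add: diff_divide_distrib)
  finally have prob: "prob_kcnf k n m (\<lambda>F. \<forall>j<length F. k - 1 \<le> card (var_cl (F ! j)))
      = 1 - real (card ?B) / real (card ?K)" .
  have "real (card ?B * n ^ 2) \<le> real (m * k ^ 4 * card ?K)"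
    using card_kcnf_deficient_le[of k n m] by (simp only: of_nat_le_iff)
  then have "real (card ?B) * real n ^ 2 \<le> real m * real k ^ 4 * real (card ?K)" by simp
  then have "real (card ?B) / real (card ?K) \<le> real m * real k ^ 4 / real n ^ 2"
    using K0 n by (simp add: divide_simps)
  with prob show ?thesis by linarith
qed

lemma prob_kcnf_mono:
  assumes "\<And>F. F \<in> kcnf_formulas k n m \<Longrightarrow> G F \<Longrightarrow> P F"
  shows "prob_kcnf k n m G \<le> prob_kcnf k n m P"
proof -
  have "card {F \<in> kcnf_formulas k n m. G F} \<le> card {F \<in> kcnf_formulas k n m. P F}"
    using assms finite_kcnf_formulas by (intro card_mono) auto
  thus ?thesis unfolding prob_kcnf_def by (intro divide_right_mono) auto
qed

lemma prob_kcnf_le_1: "prob_kcnf k n m P \<le> 1"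
proof -
  have "card {F \<in> kcnf_formulas k n m. P F} \<le> card (kcnf_formulas k n m)"
    using finite_kcnf_formulas by (intro card_mono) auto
  thus ?thesis unfolding prob_kcnf_def
    by (cases "card (kcnf_formulas k n m) = 0") (auto simp: divide_le_eq_1)
qed

section \<open>Random formulas\<close>

lemma marking_and_marginals:
  assumes k3: "k \<ge> 3"
    and n1: "0 \<le> x_mark k \<and> x_mark k < 1 \<and> 2 * rho_m ^ (k - 3) + rho_c ^ (k - 3) \<le> x_mark k * (1 - x_mark k) ^ (k * Dmax k)"
    and n2: "0 \<le> x_marg k \<and> x_marg k < 1 \<and> 2 powr (-(2 * r0 * (real k - 3))) \<le> x_marg k * (1 - x_marg k) ^ (k * Dmax k) \<and>
             1 \<le> (1 - x_marg k) ^ Dmax k * exp (theta k)"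
    and F: "F \<in> kcnf_formulas k n m"
    and dist: "\<forall>j<length F. k - 1 \<le> card (var_cl (F ! j))"
  shows "(\<exists>Vm Va Vc. marking k n F r0 Vm Va Vc) \<and>
            (\<forall>Vm Va Vc. marking k n F r0 Vm Va Vc \<longrightarrow>
               (\<forall>v \<in> Vm \<union> Va. \<forall>V \<subseteq> Vm \<union> Va. v \<notin> V \<longrightarrow> (\<forall>Lam :: nat \<Rightarrow> bool.
                  max (prob_val n F V Lam v False) (prob_val n F V Lam v True)
                    \<le> 1/2 * exp (1 / (real k * 2 powr ((r0 + delta) * real k))))))"
proof (intro conjI allI impI ballI)
  interpret M: marking_existence k n m F "Dmax k" "x_mark k"
    using F dist k3 V_good_degree_le_Dmax n1 by unfold_locales auto
  show "\<exists>Vm Va Vc. marking k n F r0 Vm Va Vc" by (rule M.exists_marking)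
next
  fix Vm Va Vc v V Lam
  assume mk: "marking k n F r0 Vm Va Vc" and v: "v \<in> Vm \<union> Va" and V: "V \<subseteq> Vm \<union> Va" and vV: "v \<notin> V"
  have bnd: "prob_val n F V Lam v b \<le> 1/2 * exp (theta k)" for b
  proof -
    interpret E: marginal_estimate k n m F Vm Va Vc V Lam v b "Dmax k" "x_marg k"
      using F mk v V vV V_good_degree_le_Dmax n2 by unfold_locales auto
    have pb: "prob_val n F V Lam v b * (1 - x_marg k) ^ Dmax k \<le> 1/2" by (rule E.prob_bound)
    have p0: "0 \<le> prob_val n F V Lam v b" unfolding prob_val_def by simp
    have "prob_val n F V Lam v b = prob_val n F V Lam v b * 1" by simp
    also have "\<dots> \<le> prob_val n F V Lam v b * ((1 - x_marg k) ^ Dmax k * exp (theta k))"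
      using n2 p0 by (intro mult_left_mono) auto
    also have "\<dots> = (prob_val n F V Lam v b * (1 - x_marg k) ^ Dmax k) * exp (theta k)" by (simp add: mult_ac)
    also have "\<dots> \<le> 1/2 * exp (theta k)" using pb by (intro mult_right_mono) auto
    finally show ?thesis .
  qed
  show "max (prob_val n F V Lam v False) (prob_val n F V Lam v True)
        \<le> 1/2 * exp (1 / (real k * 2 powr ((r0 + delta) * real k)))"
    using bnd[of False] bnd[of True] unfolding theta_def by simp
qed

lemma tendsto_prob_kcnf_distinct_vars:
  assumes "0 \<le> \<alpha>"
    and P: "\<And>n F. F \<in> kcnf_formulas k n (nat \<lfloor>\<alpha> * real n\<rfloor>) \<Longrightarrow>
              \<forall>j<length F. k - 1 \<le> card (var_cl (F ! j)) \<Longrightarrow> P n F"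
  shows "(\<lambda>n. prob_kcnf k n (nat \<lfloor>\<alpha> * real n\<rfloor>) (P n)) \<longlonglongrightarrow> 1"
proof (rule tendsto_sandwich[OF _ _ _ tendsto_const])
  show "(\<lambda>n. 1 - \<alpha> * real k ^ 4 / real n) \<longlonglongrightarrow> 1"
    using tendsto_diff[OF tendsto_const lim_const_over_n[of "\<alpha> * real k ^ 4"], of 1] by simp
  show "eventually (\<lambda>n. prob_kcnf k n (nat \<lfloor>\<alpha> * real n\<rfloor>) (P n) \<le> 1) sequentially"
    by (intro always_eventually allI prob_kcnf_le_1)
  show "eventually (\<lambda>n. 1 - \<alpha> * real k ^ 4 / real n \<le> prob_kcnf k n (nat \<lfloor>\<alpha> * real n\<rfloor>) (P n)) sequentially"
    using eventually_ge_at_top[of 1]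
  proof eventually_elim
    case (elim n)
    define m where "m = nat \<lfloor>\<alpha> * real n\<rfloor>"
    have "real m * real k ^ 4 / real n ^ 2 \<le> \<alpha> * real n * real k ^ 4 / real n ^ 2"
      unfolding m_def using \<open>0 \<le> \<alpha>\<close> by (intro divide_right_mono mult_right_mono) auto
    also have "\<dots> = \<alpha> * real k ^ 4 / real n" using elim by (simp add: power2_eq_square)
    finally have "1 - \<alpha> * real k ^ 4 / real n \<le> 1 - real m * real k ^ 4 / real n ^ 2" by simp
    also have "\<dots> \<le> prob_kcnf k n m (\<lambda>F. \<forall>j<length F. k - 1 \<le> card (var_cl (F ! j)))"
      using elim by (rule prob_distinct_vars_ge)
    also have "\<dots> \<le> prob_kcnf k n m (P n)"
      by (rule prob_kcnf_mono) (use P in \<open>auto simp: m_def\<close>)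
    finally show ?case unfolding m_def .
  qed
qed

theorem proposition2p5:
  shows "\<exists>k0::nat. \<forall>k\<ge>k0. \<forall>\<alpha>::real. 0 < \<alpha> \<and> \<alpha> \<le> alpha0 k \<longrightarrow>
    ((\<lambda>n. prob_kcnf k n (nat \<lfloor>\<alpha> * real n\<rfloor>)
       (\<lambda>F. (\<exists>Vm Va Vc. marking k n F r0 Vm Va Vc) \<and>
            (\<forall>Vm Va Vc. marking k n F r0 Vm Va Vc \<longrightarrow>
               (\<forall>v \<in> Vm \<union> Va. \<forall>V \<subseteq> Vm \<union> Va. v \<notin> V \<longrightarrow> (\<forall>Lam :: nat \<Rightarrow> bool.
                  max (prob_val n F V Lam v False) (prob_val n F V Lam v True)
                    \<le> 1/2 * exp (1 / (real k * 2 powr ((r0 + delta) * real k))))))))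
     \<longlonglongrightarrow> 1)"
proof -
  obtain K where K: "\<And>k. k \<ge> K \<Longrightarrow>
      (0 \<le> x_mark k \<and> x_mark k < 1 \<and>
        2 * rho_m ^ (k - 3) + rho_c ^ (k - 3) \<le> x_mark k * (1 - x_mark k) ^ (k * Dmax k)) \<and>
      (0 \<le> x_marg k \<and> x_marg k < 1 \<and>
        2 powr (-(2 * r0 * (real k - 3))) \<le> x_marg k * (1 - x_marg k) ^ (k * Dmax k) \<and>
        1 \<le> (1 - x_marg k) ^ Dmax k * exp (theta k))"
    using eventually_conj[OF marking_numerics marginal_numerics] unfolding eventually_sequentially by blast
  show ?thesis
    by (intro exI[of _ "max K 3"] allI impI tendsto_prob_kcnf_distinct_vars marking_and_marginals)
      (use K in auto)
qed

end
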